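(* Let $P$ be a Markovian kernel on a measurable space $(E,\mathcal{B})$, $S_n=\frac1n\sum_{k=0}^{n-1}P^k$, and $\mathcal{B}_1^+$ the set of $\mathcal{B}$-measurable $f$ with $0\le f\le1$. (i) If Assumption A holds with function $V$, then for every $N>0$ there exist $n_0>0$ and $\delta\in[0,1)$ such that $P^nf(y)\le P^{n'}f(x)+\delta$ for all $n,n'\ge n_0$, all $x,y\in[V<N]$ and all $f\in\mathcal{B}_1^+$. (ii) If Assumption A$'$ holds with function $V$, then for every $N>0$ there exist $n_0>0$ and $\delta\in[0,1)$ such that $S_nf(y)\le S_{n'}f(x)+\delta$ for all $n,n'\ge n_0$, $x,y\in[V<N]$, $f\in\mathcal{B}_1^+$. In particular, if Assumption A (resp. A$'$) holds, then Assumption C$'$ holds for the kernel $P^n$ (resp. $S_n$) whenever $n$ is sufficiently large. (iii) If Assumption B(i) holds with set $C$, then for every nonzero finite positive measure $m$ on $(E,\mathcal{B})$ there exists $n_0>0$ with $\inf_{n\ge n_0}m(S_n1_C)>0$ (i.e. Assumption C$'$(ii) holds with respect to $m$ and $C$).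
   Context: A set $C\in\mathcal{B}$ is small for a Markov kernel $Q$ if there exist $\alpha\in(0,1]$ and a probability $\nu$ with $Q(x,\cdot)\ge\alpha\nu(\cdot)$ for all $x\in C$. Assumption A: there exist a positive measurable $V$ and constants $b\ge0$, $\gamma\in(0,1)$ with $PV\le\gamma V+b$ on $E$, and $[V\le r]$ is small for $P$ for some $r>2b/(1-\gamma)$. Assumption A$'$: there exist a measurable $V\ge1$, constants $b\ge0$, $\gamma\in(0,1)$, and a small set $S$ for $P$ such that $PV\le\gamma V+b1_S$ on $E$. Assumption B(i): there exist a measurable $V:E\to[0,\infty)$, a finite constant $b$ and $C\in\mathcal{B}$ with $PV\le V-1+b1_C$ on $E$. Assumption C$'$ for a Markov kernel $Q$: (i) there exist a finite positive measure $m$, a set $C\in\mathcal{B}$, a continuous $\phi:[0,\infty)\to[0,\infty)$ with $\phi(0)=0$, and $\delta\in[0,1)$ with $Qf(x)\le\phi(m(f))+\delta$ for all $f\in\mathcal{B}_1^+$, $x\in C$; (ii) there is $n_0>0$ with $\inf_{n\ge n_0}m(S^Q_n1_C)>0$, where $S^Q_n=\frac1n\sum_{k=0}^{n-1}Q^k$. *)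

theory Defs
  imports "HOL-Probability.Probability"
begin

definition markov_kernel :: "'a measure \<Rightarrow> ('a \<Rightarrow> 'a measure) \<Rightarrow> bool" where
  "markov_kernel M K \<longleftrightarrow> K \<in> M \<rightarrow>\<^sub>M prob_algebra M"

definition kop :: "('a \<Rightarrow> 'a measure) \<Rightarrow> ('a \<Rightarrow> real) \<Rightarrow> 'a \<Rightarrow> real" where
  "kop K f x = (\<integral>y. f y \<partial>K x)"

definition savg :: "(('a \<Rightarrow> real) \<Rightarrow> 'a \<Rightarrow> real) \<Rightarrow> nat \<Rightarrow> ('a \<Rightarrow> real) \<Rightarrow> 'a \<Rightarrow> real" where
  "savg Q n f x = (1 / real n) * (\<Sum>k<n. (Q ^^ k) f x)"

definition B1p :: "'a measure \<Rightarrow> ('a \<Rightarrow> real) set" where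
  "B1p M = {f. f \<in> borel_measurable M \<and> (\<forall>x\<in>space M. 0 \<le> f x \<and> f x \<le> 1)}"

definition small_set :: "'a measure \<Rightarrow> ('a \<Rightarrow> 'a measure) \<Rightarrow> 'a set \<Rightarrow> bool" where
  "small_set M K C \<longleftrightarrow> C \<in> sets M \<and>
     (\<exists>\<alpha> \<nu>. 0 < \<alpha> \<and> \<alpha> \<le> 1 \<and> prob_space \<nu> \<and> sets \<nu> = sets M \<and>
        (\<forall>x\<in>C. \<forall>A\<in>sets M. \<alpha> * measure \<nu> A \<le> measure (K x) A))"

definition assmA :: "'a measure \<Rightarrow> ('a \<Rightarrow> 'a measure) \<Rightarrow> ('a \<Rightarrow> real) \<Rightarrow> bool" where
  "assmA M K V \<longleftrightarrow> V \<in> borel_measurable M \<and> (\<forall>x\<in>space M. 0 \<le> V x) \<and>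
     (\<exists>b \<gamma> r. 0 \<le> b \<and> 0 < \<gamma> \<and> \<gamma> < 1 \<and>
        (\<forall>x\<in>space M. (\<integral>\<^sup>+ y. ennreal (V y) \<partial>K x) \<le> ennreal (\<gamma> * V x + b)) \<and>
        r > 2 * b / (1 - \<gamma>) \<and> small_set M K {x\<in>space M. V x \<le> r})"

definition assmA' :: "'a measure \<Rightarrow> ('a \<Rightarrow> 'a measure) \<Rightarrow> ('a \<Rightarrow> real) \<Rightarrow> bool" where
  "assmA' M K V \<longleftrightarrow> V \<in> borel_measurable M \<and> (\<forall>x\<in>space M. 1 \<le> V x) \<and>
     (\<exists>b \<gamma> S. 0 \<le> b \<and> 0 < \<gamma> \<and> \<gamma> < 1 \<and> small_set M K S \<and>
        (\<forall>x\<in>space M. (\<integral>\<^sup>+ y. ennreal (V y) \<partial>K x) \<le> ennreal (\<gamma> * V x + b * indicator S x)))"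

text \<open>Assumption B(i): PV <= V - 1 + b 1_C, written as PV + 1 <= V + b 1_C
  (exact also when the right-hand side would be negative).\<close>
definition assmB :: "'a measure \<Rightarrow> ('a \<Rightarrow> 'a measure) \<Rightarrow> ('a \<Rightarrow> real) \<Rightarrow> real \<Rightarrow> 'a set \<Rightarrow> bool" where
  "assmB M K V b C \<longleftrightarrow> V \<in> borel_measurable M \<and> (\<forall>x\<in>space M. 0 \<le> V x) \<and> C \<in> sets M \<and>
     (\<forall>x\<in>space M. (\<integral>\<^sup>+ y. ennreal (V y) \<partial>K x) + 1 \<le> ennreal (V x + b * indicator C x))"

definition assmC' :: "'a measure \<Rightarrow> (('a \<Rightarrow> real) \<Rightarrow> 'a \<Rightarrow> real) \<Rightarrow> bool" where
  "assmC' M Q \<longleftrightarrow>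
     (\<exists>m C \<phi> \<delta>. finite_measure m \<and> sets m = sets M \<and> C \<in> sets M \<and>
        continuous_on {0..} \<phi> \<and> (\<forall>t\<ge>0. 0 \<le> \<phi> t) \<and> \<phi> 0 = 0 \<and>
        0 \<le> \<delta> \<and> \<delta> < 1 \<and>
        (\<forall>f\<in>B1p M. \<forall>x\<in>C. Q f x \<le> \<phi> (\<integral>y. f y \<partial>m) + \<delta>) \<and>
        (\<exists>n0::nat. n0 > 0 \<and> (INF n\<in>{n0..}. \<integral>y. savg Q n (indicator C) y \<partial>m) > 0))"

end

(* A drift condition forces the chain, started anywhere in a sublevel set [V < N], to spend a
   uniformly positive fraction of its time in the minorizing set C: under the geometric drift of
   Assumption A this holds for P^n 1_C itself, by Markov's inequality applied to V; under A' and B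
   it holds for Cesaro averages, by telescoping the drift inequality for the truncation min V L.
   If P^k 1_C >= c on [V < N], the minorization P f >= alpha nu(f) on C sandwiches P^(k+1) f
   (and similarly S_n f) between alpha c nu(f) and alpha c nu(f) + 1 - alpha c there, so any
   two such values differ by at most 1 - alpha c. The upper half of the sandwich is C'(i) with
   phi(t) = alpha c t, and recurrence into C from a nu-non-null sublevel set gives C'(ii). *)

theory Submission
  imports Defs
begin

definition bounded_measurable :: "'a measure \<Rightarrow> ('a \<Rightarrow> real) \<Rightarrow> bool" where
  "bounded_measurable M f \<longleftrightarrow> f \<in> borel_measurable M \<and> (\<exists>B. \<forall>x\<in>space M. \<bar>f x\<bar> \<le> B)"

text \<open>The common structure of \<open>P\<^sup>n\<close> and \<open>S\<^sub>n\<close>, imposed only on bounded measurable functions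
  and at points of \<open>space M\<close>.\<close>
definition markov_operator :: "'a measure \<Rightarrow> (('a \<Rightarrow> real) \<Rightarrow> 'a \<Rightarrow> real) \<Rightarrow> bool" where
  "markov_operator M Q \<longleftrightarrow>
   (\<forall>f. bounded_measurable M f \<longrightarrow> bounded_measurable M (Q f)) \<and>
   (\<forall>f g x. bounded_measurable M f \<longrightarrow> bounded_measurable M g \<longrightarrow> x \<in> space M \<longrightarrow>
      Q (\<lambda>z. f z + g z) x = Q f x + Q g x) \<and>
   (\<forall>f c x. bounded_measurable M f \<longrightarrow> x \<in> space M \<longrightarrow> Q (\<lambda>z. c * f z) x = c * Q f x) \<and>
   (\<forall>c x. x \<in> space M \<longrightarrow> Q (\<lambda>z. c) x = c) \<and>
   (\<forall>f g x. bounded_measurable M f \<longrightarrow> bounded_measurable M g \<longrightarrow>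
      (\<forall>z\<in>space M. f z \<le> g z) \<longrightarrow> x \<in> space M \<longrightarrow> Q f x \<le> Q g x)"

lemma bounded_measurable_const [simp]: "bounded_measurable M (\<lambda>x. c)"
  unfolding bounded_measurable_def by auto

lemma bounded_measurable_imp_measurable: "bounded_measurable M f \<Longrightarrow> f \<in> borel_measurable M"
  unfolding bounded_measurable_def by auto

lemma bounded_measurable_add:
  assumes "bounded_measurable M f" "bounded_measurable M g"
  shows "bounded_measurable M (\<lambda>x. f x + g x)"
proof -
  obtain B1 B2 where "\<forall>x\<in>space M. \<bar>f x\<bar> \<le> B1" "\<forall>x\<in>space M. \<bar>g x\<bar> \<le> B2"
    using assms unfolding bounded_measurable_def by blast
  then have "\<forall>x\<in>space M. \<bar>f x + g x\<bar> \<le> B1 + B2"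
    by (auto intro: order_trans[OF abs_triangle_ineq] add_mono)
  then show ?thesis using assms unfolding bounded_measurable_def by auto
qed

lemma bounded_measurable_cmult: "bounded_measurable M f \<Longrightarrow> bounded_measurable M (\<lambda>x. c * f x)"
  unfolding bounded_measurable_def
  by (auto simp: abs_mult intro!: exI[where x = "\<bar>c\<bar> * _"] mult_left_mono)

lemma bounded_measurable_diff:
  "bounded_measurable M f \<Longrightarrow> bounded_measurable M g \<Longrightarrow> bounded_measurable M (\<lambda>x. f x - g x)"
  using bounded_measurable_add[of M f "\<lambda>x. (-1) * g x"] bounded_measurable_cmult[of M g "-1"] by simp

lemma bounded_measurable_sum:
  "(\<And>i. i \<in> I \<Longrightarrow> bounded_measurable M (f i)) \<Longrightarrow> bounded_measurable M (\<lambda>x. \<Sum>i\<in>I. f i x)"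
  by (induction I rule: infinite_finite_induct) (auto intro: bounded_measurable_add)

lemma bounded_measurable_indicator: "A \<in> sets M \<Longrightarrow> bounded_measurable M (indicator A)"
  unfolding bounded_measurable_def by (auto intro!: exI[of _ 1] simp: indicator_def)

lemma bounded_measurable_truncation:
  assumes "V \<in> borel_measurable M" "\<And>x. x \<in> space M \<Longrightarrow> 0 \<le> V x" "0 \<le> L"
  shows "bounded_measurable M (\<lambda>z. min (V z) L)"
  unfolding bounded_measurable_def using assms by (auto intro!: exI[of _ L])

lemma bounded_measurable_cong:
  assumes "bounded_measurable M f" "\<And>x. x \<in> space M \<Longrightarrow> f x = g x"
  shows "bounded_measurable M g"
  using assms measurable_cong[of M f g] unfolding bounded_measurable_def by auto

lemma B1p_bounded_measurable: "f \<in> B1p M \<Longrightarrow> bounded_measurable M f"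
  unfolding B1p_def bounded_measurable_def by (auto intro!: exI[of _ 1])

lemma B1pD: "f \<in> B1p M \<Longrightarrow> z \<in> space M \<Longrightarrow> 0 \<le> f z \<and> f z \<le> 1"
  unfolding B1p_def by auto

lemma B1p_one_minus: "f \<in> B1p M \<Longrightarrow> (\<lambda>z. 1 - f z) \<in> B1p M"
  unfolding B1p_def by auto

section \<open>Markov operators\<close>

context
  fixes M Q
  assumes Q: "markov_operator M Q"
begin

lemma markov_operator_closed: "bounded_measurable M f \<Longrightarrow> bounded_measurable M (Q f)"
  and markov_operator_add: "bounded_measurable M f \<Longrightarrow> bounded_measurable M g \<Longrightarrow> x \<in> space M \<Longrightarrow>
    Q (\<lambda>z. f z + g z) x = Q f x + Q g x"
  and markov_operator_cmult: "bounded_measurable M f \<Longrightarrow> x \<in> space M \<Longrightarrow> Q (\<lambda>z. c * f z) x = c * Q f x"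
  and markov_operator_const: "x \<in> space M \<Longrightarrow> Q (\<lambda>z. c) x = c"
  and markov_operator_mono: "bounded_measurable M f \<Longrightarrow> bounded_measurable M g \<Longrightarrow>
    (\<And>z. z \<in> space M \<Longrightarrow> f z \<le> g z) \<Longrightarrow> x \<in> space M \<Longrightarrow> Q f x \<le> Q g x"
  using Q unfolding markov_operator_def by simp_all


lemma markov_operator_cong:
  assumes "bounded_measurable M f" "\<And>z. z \<in> space M \<Longrightarrow> f z = g z" "x \<in> space M"
  shows "Q f x = Q g x"
proof -
  have g: "bounded_measurable M g" using bounded_measurable_cong assms by blast
  show ?thesis
    using markov_operator_mono[OF assms(1) g _ assms(3)] markov_operator_mono[OF g assms(1) _ assms(3)]
      assms(2) by (simp add: order_antisym)
qed

lemma markov_operator_lincomb: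
  assumes "bounded_measurable M f" "bounded_measurable M g" "x \<in> space M"
  shows "Q (\<lambda>z. a * f z + b * g z) x = a * Q f x + b * Q g x"
  using markov_operator_add[OF bounded_measurable_cmult[OF assms(1)] bounded_measurable_cmult[OF assms(2)]
      assms(3)]
    markov_operator_cmult[OF assms(1,3)] markov_operator_cmult[OF assms(2,3)] by simp

lemma markov_operator_diff:
  assumes "bounded_measurable M f" "bounded_measurable M g" "x \<in> space M"
  shows "Q (\<lambda>z. f z - g z) x = Q f x - Q g x"
  using markov_operator_lincomb[OF assms, of 1 "-1"] by simp

lemma markov_operator_nonneg:
  assumes "bounded_measurable M g" "\<And>z. z \<in> space M \<Longrightarrow> 0 \<le> g z" "x \<in> space M"
  shows "0 \<le> Q g x"
  using markov_operator_mono[OF bounded_measurable_const assms] markov_operator_const[OF assms(3)] by simp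

lemma markov_operator_le_const:
  assumes "bounded_measurable M g" "\<And>z. z \<in> space M \<Longrightarrow> g z \<le> c" "x \<in> space M"
  shows "Q g x \<le> c"
  using markov_operator_mono[OF assms(1) bounded_measurable_const assms(2,3)]
    markov_operator_const[OF assms(3)] by simp

lemma markov_operator_indicator_compl:
  assumes "A \<in> sets M" "x \<in> space M"
  shows "Q (indicator (space M - A)) x = 1 - Q (indicator A) x"
proof -
  have "Q (indicator (space M - A)) x = Q (\<lambda>z. 1 - indicator A z) x"
    using assms by (intro markov_operator_cong bounded_measurable_indicator) (auto simp: indicator_def)
  also have "\<dots> = 1 - Q (indicator A) x"
    using markov_operator_diff[OF bounded_measurable_const bounded_measurable_indicator[OF assms(1)] assms(2)]
      markov_operator_const[OF assms(2)] by simp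
  finally show ?thesis .
qed

lemma markov_operator_sandwich:
  assumes y: "y \<in> space M" and h: "bounded_measurable M h" and C: "C \<in> sets M"
    and lo: "\<And>z. z \<in> space M \<Longrightarrow> e * indicator C z \<le> h z"
    and hi: "\<And>z. z \<in> space M \<Longrightarrow> h z \<le> 1 - e' * indicator C z"
  shows "e * Q (indicator C) y \<le> Q h y" "Q h y \<le> 1 - e' * Q (indicator C) y"
proof -
  note IC = bounded_measurable_indicator[OF C]
  have "e * Q (indicator C) y = Q (\<lambda>z. e * indicator C z) y"
    using markov_operator_cmult[OF IC y] by simp
  also have "\<dots> \<le> Q h y"
    using lo by (intro markov_operator_mono[OF bounded_measurable_cmult[OF IC] h _ y])
  finally show "e * Q (indicator C) y \<le> Q h y" .
  have "Q h y \<le> Q (\<lambda>z. 1 * 1 + (-e') * indicator C z) y"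
    using hi by (intro markov_operator_mono[OF h _ _ y] bounded_measurable_add bounded_measurable_cmult IC)
      simp_all
  also have "\<dots> = 1 * Q (\<lambda>z. 1) y + (-e') * Q (indicator C) y"
    by (rule markov_operator_lincomb[OF bounded_measurable_const IC y])
  finally show "Q h y \<le> 1 - e' * Q (indicator C) y" using markov_operator_const[OF y, of 1] by simp
qed

end

lemma markov_operator_id: "markov_operator M id"
  unfolding markov_operator_def by auto

lemma markov_operator_comp:
  assumes Q: "markov_operator M Q" and R: "markov_operator M R"
  shows "markov_operator M (\<lambda>f. Q (R f))"
  unfolding markov_operator_def
proof (intro conjI allI impI)
  fix f assume "bounded_measurable M f"
  then show "bounded_measurable M (Q (R f))"
    by (intro markov_operator_closed[OF Q] markov_operator_closed[OF R])
next
  fix f g x assume f: "bounded_measurable M f" and g: "bounded_measurable M g" and x: "x \<in> space M"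
  have "Q (R (\<lambda>z. f z + g z)) x = Q (\<lambda>z. R f z + R g z) x"
    using f g x by (intro markov_operator_cong[OF Q] markov_operator_closed[OF R] bounded_measurable_add
        markov_operator_add[OF R])
  also have "\<dots> = Q (R f) x + Q (R g) x"
    using f g x by (intro markov_operator_add[OF Q] markov_operator_closed[OF R])
  finally show "Q (R (\<lambda>z. f z + g z)) x = Q (R f) x + Q (R g) x" .
next
  fix f c x assume f: "bounded_measurable M f" and x: "x \<in> space M"
  have "Q (R (\<lambda>z. c * f z)) x = Q (\<lambda>z. c * R f z) x"
    using f x by (intro markov_operator_cong[OF Q] markov_operator_closed[OF R] bounded_measurable_cmult
        markov_operator_cmult[OF R])
  also have "\<dots> = c * Q (R f) x"
    using f x by (intro markov_operator_cmult[OF Q] markov_operator_closed[OF R])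
  finally show "Q (R (\<lambda>z. c * f z)) x = c * Q (R f) x" .
next
  fix c :: real and x assume x: "x \<in> space M"
  have "Q (R (\<lambda>z. c)) x = Q (\<lambda>z. c) x"
    using x by (intro markov_operator_cong[OF Q] markov_operator_closed[OF R] bounded_measurable_const
        markov_operator_const[OF R])
  then show "Q (R (\<lambda>z. c)) x = c" using markov_operator_const[OF Q x] by simp
next
  fix f g x assume f: "bounded_measurable M f" and g: "bounded_measurable M g"
    and le: "\<forall>z\<in>space M. f z \<le> g z" and x: "x \<in> space M"
  show "Q (R f) x \<le> Q (R g) x"
    using f g le x
    by (intro markov_operator_mono[OF Q] markov_operator_closed[OF R] markov_operator_mono[OF R]) auto
qed

lemma markov_operator_funpow: "markov_operator M Q \<Longrightarrow> markov_operator M (Q ^^ k)"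
  by (induction k) (simp_all add: markov_operator_id markov_operator_comp comp_def)

lemma markov_operator_savg:
  assumes Q: "markov_operator M Q" and n: "0 < n"
  shows "markov_operator M (savg Q n)"
  unfolding markov_operator_def savg_def
proof (intro conjI allI impI)
  note Qk = markov_operator_funpow[OF Q]
  fix f assume "bounded_measurable M f"
  then show "bounded_measurable M (\<lambda>x. 1 / real n * (\<Sum>k<n. (Q ^^ k) f x))"
    by (intro bounded_measurable_cmult bounded_measurable_sum markov_operator_closed[OF Qk])
next
  fix f g x assume "bounded_measurable M f" "bounded_measurable M g" "x \<in> space M"
  then show "1 / real n * (\<Sum>k<n. (Q ^^ k) (\<lambda>z. f z + g z) x) =
    1 / real n * (\<Sum>k<n. (Q ^^ k) f x) + 1 / real n * (\<Sum>k<n. (Q ^^ k) g x)"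
    by (simp add: markov_operator_add[OF markov_operator_funpow[OF Q]] sum.distrib distrib_left)
next
  fix f c x assume "bounded_measurable M f" "x \<in> space M"
  then show "1 / real n * (\<Sum>k<n. (Q ^^ k) (\<lambda>z. c * f z) x) = c * (1 / real n * (\<Sum>k<n. (Q ^^ k) f x))"
    by (simp add: markov_operator_cmult[OF markov_operator_funpow[OF Q]] sum_distrib_left)
next
  fix c x assume "x \<in> space M"
  then show "1 / real n * (\<Sum>k<n. (Q ^^ k) (\<lambda>z. c) x) = c"
    using n by (simp add: markov_operator_const[OF markov_operator_funpow[OF Q]])
next
  fix f g x assume "bounded_measurable M f" "bounded_measurable M g" "\<forall>z\<in>space M. f z \<le> g z" "x \<in> space M"
  then show "1 / real n * (\<Sum>k<n. (Q ^^ k) f x) \<le> 1 / real n * (\<Sum>k<n. (Q ^^ k) g x)"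
    by (intro mult_left_mono sum_mono markov_operator_mono[OF markov_operator_funpow[OF Q]]) auto
qed

lemma sum_funpow_lincomb:
  assumes "markov_operator M Q" "bounded_measurable M f" "bounded_measurable M g" "x \<in> space M"
  shows "(\<Sum>k<m. (Q ^^ k) (\<lambda>z. a * f z + c * g z) x) = a * (\<Sum>k<m. (Q ^^ k) f x) + c * (\<Sum>k<m. (Q ^^ k) g x)"
  using markov_operator_lincomb[OF markov_operator_funpow[OF assms(1)] assms(2-4)]
  by (simp add: sum.distrib sum_distrib_left)

lemma markov_kernel_space:
  assumes "markov_kernel M K" "x \<in> space M"
  shows "prob_space (K x)" "sets (K x) = sets M" "space (K x) = space M"
  using measurable_space[OF assms(1)[unfolded markov_kernel_def] assms(2)]
  by (auto simp: space_prob_algebra dest: sets_eq_imp_space_eq)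

lemma markov_kernel_integrable:
  assumes K: "markov_kernel M K" and x: "x \<in> space M" and f: "bounded_measurable M f"
  shows "integrable (K x) f"
proof -
  interpret prob_space "K x" using markov_kernel_space[OF K x] by simp
  obtain B where "\<forall>z\<in>space M. \<bar>f z\<bar> \<le> B" using f unfolding bounded_measurable_def by blast
  then show ?thesis
    using bounded_measurable_imp_measurable[OF f] markov_kernel_space[OF K x]
    by (intro integrable_const_bound[of _ B]) (auto cong: measurable_cong_sets)
qed

lemma markov_operator_kop:
  assumes K: "markov_kernel M K"
  shows "markov_operator M (kop K)"
  unfolding markov_operator_def kop_def
proof (intro conjI allI impI)
  fix f assume f: "bounded_measurable M f"
  have "K \<in> M \<rightarrow>\<^sub>M subprob_algebra M"
    using K unfolding markov_kernel_def by (rule measurable_prob_algebraD)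
  then have "(\<lambda>x. integral\<^sup>L (K x) f) \<in> borel_measurable M"
    using integral_measurable_subprob_algebra[OF bounded_measurable_imp_measurable[OF f]]
    by (simp add: measurable_compose[where f = K, simplified comp_def])
  moreover obtain B where B: "\<forall>z\<in>space M. \<bar>f z\<bar> \<le> B"
    using f unfolding bounded_measurable_def by blast
  moreover have "\<bar>integral\<^sup>L (K x) f\<bar> \<le> B" if x: "x \<in> space M" for x
  proof -
    interpret prob_space "K x" using markov_kernel_space[OF K x] by simp
    have "\<bar>integral\<^sup>L (K x) f\<bar> \<le> integral\<^sup>L (K x) (\<lambda>z. \<bar>f z\<bar>)"
      by (rule integral_abs_bound)
    also have "\<dots> \<le> integral\<^sup>L (K x) (\<lambda>z. B)"
      using B markov_kernel_space[OF K x] markov_kernel_integrable[OF K x f]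
      by (intro integral_mono) auto
    finally show ?thesis using prob_space by simp
  qed
  ultimately show "bounded_measurable M (\<lambda>x. integral\<^sup>L (K x) f)"
    unfolding bounded_measurable_def by blast
next
  fix f g x assume "bounded_measurable M f" "bounded_measurable M g" "x \<in> space M"
  then show "(\<integral>y. f y + g y \<partial>K x) = integral\<^sup>L (K x) f + integral\<^sup>L (K x) g"
    using markov_kernel_integrable[OF K] by simp
next
  fix f c x assume "bounded_measurable M f" "x \<in> space M"
  show "(\<integral>y. c * f y \<partial>K x) = c * integral\<^sup>L (K x) f" by simp
next
  fix c :: real and x assume x: "x \<in> space M"
  interpret prob_space "K x" using markov_kernel_space[OF K x] by simp
  show "(\<integral>y. c \<partial>K x) = c" using prob_space by simp
next
  fix f g x assume "bounded_measurable M f" "bounded_measurable M g" "\<forall>z\<in>space M. f z \<le> g z" "x \<in> space M"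
  then show "integral\<^sup>L (K x) f \<le> integral\<^sup>L (K x) g"
    using markov_kernel_integrable[OF K] markov_kernel_space[OF K]
    by (intro integral_mono) auto
qed

lemma kop_eq_nn_integral:
  assumes K: "markov_kernel M K" and x: "x \<in> space M" and f: "bounded_measurable M f"
    and nn: "\<And>z. z \<in> space M \<Longrightarrow> 0 \<le> f z"
  shows "ennreal (kop K f x) = (\<integral>\<^sup>+ y. ennreal (f y) \<partial>K x)"
proof -
  have "AE y in K x. 0 \<le> f y" using nn markov_kernel_space(3)[OF K x] by (intro AE_I2) auto
  then show ?thesis
    using nn_integral_eq_integral[OF markov_kernel_integrable[OF K x f]] unfolding kop_def by simp
qed

lemma
  assumes nu: "prob_space \<nu>" "sets \<nu> = sets M" and f: "f \<in> B1p M"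
  shows integrable_B1p: "integrable \<nu> f"
    and integral_B1p_nonneg: "0 \<le> (\<integral>y. f y \<partial>\<nu>)"
    and integral_B1p_le_one: "(\<integral>y. f y \<partial>\<nu>) \<le> 1"
    and integral_B1p_one_minus: "(\<integral>y. 1 - f y \<partial>\<nu>) = 1 - (\<integral>y. f y \<partial>\<nu>)"
proof -
  interpret nu: prob_space \<nu> by (rule nu(1))
  have spn: "space \<nu> = space M" using nu(2) by (rule sets_eq_imp_space_eq)
  have fmn: "f \<in> borel_measurable \<nu>"
    using f nu(2) unfolding B1p_def by (simp cong: measurable_cong_sets)
  show i: "integrable \<nu> f" using B1pD[OF f] spn fmn by (intro nu.integrable_const_bound[of _ 1]) auto
  show "0 \<le> (\<integral>y. f y \<partial>\<nu>)" using B1pD[OF f] spn by (intro Bochner_Integration.integral_nonneg) auto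
  have "(\<integral>y. f y \<partial>\<nu>) \<le> (\<integral>y. 1 \<partial>\<nu>)" using B1pD[OF f] spn i by (intro integral_mono) auto
  then show "(\<integral>y. f y \<partial>\<nu>) \<le> 1" using nu.prob_space by simp
  show "(\<integral>y. 1 - f y \<partial>\<nu>) = 1 - (\<integral>y. f y \<partial>\<nu>)" using i nu.prob_space by simp
qed

lemma kop_minorization:
  assumes K: "markov_kernel M K" and a: "0 \<le> \<alpha>" and nu: "prob_space \<nu>" "sets \<nu> = sets M"
    and le: "\<And>A. A \<in> sets M \<Longrightarrow> \<alpha> * measure \<nu> A \<le> measure (K x) A"
    and x: "x \<in> space M" and f: "f \<in> B1p M"
  shows "\<alpha> * (\<integral>y. f y \<partial>\<nu>) \<le> kop K f x"
proof -
  interpret nu: prob_space \<nu> by (rule nu(1))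
  interpret kx: prob_space "K x" using markov_kernel_space[OF K x] by simp
  have st: "sets (K x) = sets M" using markov_kernel_space[OF K x] by auto
  have fb: "\<And>z. z \<in> space M \<Longrightarrow> 0 \<le> f z" using B1pD[OF f] by simp
  have fmn: "f \<in> borel_measurable \<nu>"
    using f nu(2) unfolding B1p_def by (simp cong: measurable_cong_sets)
  define D where "D = scale_measure (ennreal \<alpha>) \<nu>"
  have sD: "sets D = sets (K x)" unfolding D_def using st nu(2) by simp
  have "emeasure D A \<le> emeasure (K x) A" for A
  proof (cases "A \<in> sets M")
    case True
    have "emeasure D A = ennreal (\<alpha> * measure \<nu> A)"
      unfolding D_def using nu.emeasure_eq_measure a by (simp add: ennreal_mult')
    also have "\<dots> \<le> emeasure (K x) A" using le[OF True] kx.emeasure_eq_measure by simp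
    finally show ?thesis .
  qed (use sD st in \<open>simp add: emeasure_notin_sets\<close>)
  then have DK: "D \<le> K x"
    using sD sets_eq_imp_space_eq[OF sD] by (simp add: le_measure_iff le_fun_def)
  have "AE y in \<nu>. 0 \<le> f y" using fb sets_eq_imp_space_eq[OF nu(2)] by (intro AE_I2) auto
  then have "ennreal (\<alpha> * (\<integral>y. f y \<partial>\<nu>)) = ennreal \<alpha> * (\<integral>\<^sup>+ y. ennreal (f y) \<partial>\<nu>)"
    using nn_integral_eq_integral[OF integrable_B1p[OF nu f]] a by (simp add: ennreal_mult')
  also have "\<dots> = (\<integral>\<^sup>+ y. ennreal (f y) \<partial>D)"
    unfolding D_def using fmn by (simp add: nn_integral_scale_measure)
  also have "\<dots> \<le> (\<integral>\<^sup>+ y. ennreal (f y) \<partial>K x)"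
    by (rule nn_integral_mono_measure[OF sD DK])
  also have "\<dots> = ennreal (kop K f x)"
    using kop_eq_nn_integral[OF K x B1p_bounded_measurable[OF f] fb] by simp
  finally show ?thesis
    using markov_operator_nonneg[OF markov_operator_kop[OF K] B1p_bounded_measurable[OF f] fb x]
    by (simp add: ennreal_le_iff)
qed

section \<open>Drift conditions\<close>

text \<open>The drift inequality \<open>Q V \<le> \<gamma> V + h\<close>, tested on bounded functions below an affine image
  of \<open>V\<close>: the Lyapunov function \<open>V\<close> may be unbounded, so \<open>Q V\<close> itself is not available.\<close>
definition drift :: "'a measure \<Rightarrow> (('a \<Rightarrow> real) \<Rightarrow> 'a \<Rightarrow> real) \<Rightarrow> ('a \<Rightarrow> real) \<Rightarrow> real \<Rightarrow> ('a \<Rightarrow> real) \<Rightarrow> bool"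
  where "drift M Q V \<gamma> h \<longleftrightarrow> (\<forall>c d g x. 0 \<le> c \<longrightarrow> 0 \<le> d \<longrightarrow> bounded_measurable M g \<longrightarrow>
     (\<forall>z\<in>space M. 0 \<le> g z \<and> g z \<le> c * V z + d) \<longrightarrow> x \<in> space M \<longrightarrow> Q g x \<le> c * (\<gamma> * V x + h x) + d)"

lemma driftD:
  assumes "drift M Q V \<gamma> h" "0 \<le> c" "0 \<le> d" "bounded_measurable M g" "\<And>z. z \<in> space M \<Longrightarrow> 0 \<le> g z"
    "\<And>z. z \<in> space M \<Longrightarrow> g z \<le> c * V z + d" "x \<in> space M"
  shows "Q g x \<le> c * (\<gamma> * V x + h x) + d"
  using assms unfolding drift_def by simp

lemma drift_kop:
  assumes K: "markov_kernel M K" and V: "V \<in> borel_measurable M" and V0: "\<And>x. x \<in> space M \<Longrightarrow> 0 \<le> V x"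
    and pos: "\<And>x. x \<in> space M \<Longrightarrow> 0 \<le> \<gamma> * V x + h x"
    and dr: "\<And>x. x \<in> space M \<Longrightarrow> (\<integral>\<^sup>+ y. ennreal (V y) \<partial>K x) \<le> ennreal (\<gamma> * V x + h x)"
  shows "drift M (kop K) V \<gamma> h"
  unfolding drift_def
proof (intro allI impI)
  fix c d g x assume c: "0 \<le> (c::real)" and d: "0 \<le> (d::real)" and g: "bounded_measurable M g"
    and gb: "\<forall>z\<in>space M. 0 \<le> g z \<and> g z \<le> c * V z + d" and x: "x \<in> space M"
  interpret prob_space "K x" using markov_kernel_space[OF K x] by simp
  have sp: "space (K x) = space M" and st: "sets (K x) = sets M" using markov_kernel_space[OF K x] by auto
  have Vm: "V \<in> borel_measurable (K x)" using V st by (simp cong: measurable_cong_sets)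
  have "ennreal (kop K g x) = (\<integral>\<^sup>+ y. ennreal (g y) \<partial>K x)"
    using kop_eq_nn_integral[OF K x g] gb by simp
  also have "\<dots> \<le> (\<integral>\<^sup>+ y. ennreal c * ennreal (V y) + ennreal d \<partial>K x)"
  proof (rule nn_integral_mono)
    fix y assume "y \<in> space (K x)"
    then have "g y \<le> c * V y + d" "0 \<le> V y" using gb V0 sp by auto
    then show "ennreal (g y) \<le> ennreal c * ennreal (V y) + ennreal d"
      using c d by (simp add: ennreal_mult'[symmetric] ennreal_plus[symmetric] del: ennreal_plus)
  qed
  also have "\<dots> = ennreal c * (\<integral>\<^sup>+ y. ennreal (V y) \<partial>K x) + ennreal d"
    using Vm by (simp add: nn_integral_add nn_integral_cmult emeasure_space_1)
  also have "\<dots> \<le> ennreal c * ennreal (\<gamma> * V x + h x) + ennreal d"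
    using dr[OF x] by (intro add_mono mult_left_mono) auto
  also have "\<dots> = ennreal (c * (\<gamma> * V x + h x) + d)"
    using c d pos[OF x] by (simp add: ennreal_mult'[symmetric] ennreal_plus[symmetric] del: ennreal_plus)
  finally show "kop K g x \<le> c * (\<gamma> * V x + h x) + d"
    using c d pos[OF x] by (subst (asm) ennreal_le_iff) auto
qed

lemma drift_mono:
  assumes "drift M Q V \<gamma> h" "\<And>x. x \<in> space M \<Longrightarrow> h x \<le> h' x"
  shows "drift M Q V \<gamma> h'"
  unfolding drift_def
proof (intro allI impI)
  fix c d g x assume c: "0 \<le> (c::real)" and d: "0 \<le> (d::real)" and g: "bounded_measurable M g"
    and gb: "\<forall>z\<in>space M. 0 \<le> g z \<and> g z \<le> c * V z + d" and x: "x \<in> space M"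
  have "Q g x \<le> c * (\<gamma> * V x + h x) + d" using driftD[OF assms(1) c d g _ _ x] gb by simp
  also have "\<dots> \<le> c * (\<gamma> * V x + h' x) + d" using assms(2)[OF x] c by (simp add: mult_left_mono)
  finally show "Q g x \<le> c * (\<gamma> * V x + h' x) + d" .
qed

lemma sum_power_le_inverse_one_minus:
  assumes "0 \<le> (\<gamma>::real)" "\<gamma> < 1"
  shows "(\<Sum>j<k. \<gamma> ^ j) \<le> 1 / (1 - \<gamma>)"
proof -
  have "(\<Sum>j<k. \<gamma> ^ j) = (1 - \<gamma> ^ k) / (1 - \<gamma>)" using assms by (simp add: sum_gp_strict)
  also have "\<dots> \<le> 1 / (1 - \<gamma>)" using assms by (intro divide_right_mono) auto
  finally show ?thesis .
qed

lemma drift_funpow: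
  assumes Q: "markov_operator M Q" and dr: "drift M Q V \<gamma> (\<lambda>_. b)" and g0: "0 \<le> \<gamma>" and b0: "0 \<le> b"
  shows "drift M (Q ^^ k) V (\<gamma> ^ k) (\<lambda>_. b * (\<Sum>j<k. \<gamma> ^ j))"
proof (induction k)
  case 0
  show ?case unfolding drift_def by auto
next
  case (Suc k)
  show ?case unfolding drift_def
  proof (intro allI impI)
    fix c d g x assume c: "0 \<le> (c::real)" and d: "0 \<le> (d::real)" and g: "bounded_measurable M g"
      and gb: "\<forall>z\<in>space M. 0 \<le> g z \<and> g z \<le> c * V z + d" and x: "x \<in> space M"
    have Qg0: "0 \<le> Q g z" if "z \<in> space M" for z
      using markov_operator_nonneg[OF Q g _ that] gb by simp
    have Qgb: "Q g z \<le> (c * \<gamma>) * V z + (c * b + d)" if "z \<in> space M" for z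
      using driftD[OF dr c d g _ _ that] gb by (simp add: algebra_simps)
    have "(Q ^^ Suc k) g x = (Q ^^ k) (Q g) x" by (simp add: funpow_Suc_right del: funpow.simps)
    also have "\<dots> \<le> (c * \<gamma>) * (\<gamma> ^ k * V x + b * (\<Sum>j<k. \<gamma> ^ j)) + (c * b + d)"
      using driftD[OF Suc.IH _ _ markov_operator_closed[OF Q g] Qg0 Qgb x] c d g0 b0 by simp
    also have "\<dots> = c * (\<gamma> ^ Suc k * V x + b * (1 + \<gamma> * (\<Sum>j<k. \<gamma> ^ j))) + d"
      by (simp add: algebra_simps)
    also have "1 + \<gamma> * (\<Sum>j<k. \<gamma> ^ j) = (\<Sum>j<Suc k. \<gamma> ^ j)"
      by (simp add: sum.lessThan_Suc_shift sum_distrib_left del: sum.lessThan_Suc)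
    finally show "(Q ^^ Suc k) g x \<le> c * (\<gamma> ^ Suc k * V x + b * (\<Sum>j<Suc k. \<gamma> ^ j)) + d" .
  qed
qed

text \<open>Rate \<open>1/2\<close> because \<open>(\<Sum>k<n. \<gamma>^k) \<le> 1/(1-\<gamma>) \<le> n/2\<close>.\<close>
lemma drift_savg:
  assumes P: "markov_operator M P" and dr: "drift M P V \<gamma> (\<lambda>_. b)" and g: "0 < \<gamma>" "\<gamma> < 1" and b: "0 \<le> b"
    and V0: "\<And>x. x \<in> space M \<Longrightarrow> 0 \<le> V x" and n: "2 / (1 - \<gamma>) \<le> real n"
  shows "drift M (savg P n) V (1/2) (\<lambda>_. b / (1 - \<gamma>))"
  unfolding drift_def
proof (intro allI impI)
  fix c d g x assume c: "0 \<le> (c::real)" and d: "0 \<le> (d::real)" and gm: "bounded_measurable M g"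
    and gb: "\<forall>z\<in>space M. 0 \<le> g z \<and> g z \<le> c * V z + d" and x: "x \<in> space M"
  define B where "B = b / (1 - \<gamma>)"
  have "0 < 2 / (1 - \<gamma>)" using g by simp
  then have npos: "0 < real n" using n by linarith
  have each: "(P ^^ k) g x \<le> c * \<gamma> ^ k * V x + (c * B + d)" for k
  proof -
    have "(P ^^ k) g x \<le> c * (\<gamma> ^ k * V x + b * (\<Sum>j<k. \<gamma> ^ j)) + d"
      using driftD[OF drift_funpow[OF P dr _ b] c d gm _ _ x] gb g by simp
    moreover have "b * (\<Sum>j<k. \<gamma> ^ j) \<le> B"
      unfolding B_def using sum_power_le_inverse_one_minus[of \<gamma> k] g b
      by (simp add: mult_left_mono divide_inverse)
    then have "c * (b * (\<Sum>j<k. \<gamma> ^ j)) \<le> c * B" using c by (rule mult_left_mono)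
    ultimately show ?thesis by (simp add: algebra_simps)
  qed
  have gsum: "(\<Sum>k<n. \<gamma> ^ k) / real n \<le> 1/2"
  proof -
    have "(\<Sum>k<n. \<gamma> ^ k) \<le> 1 / (1 - \<gamma>)" using sum_power_le_inverse_one_minus[of \<gamma> n] g by simp
    also have "\<dots> \<le> real n / 2" using n g by (simp add: field_simps)
    finally show ?thesis using npos by (simp add: field_simps)
  qed
  have "savg P n g x \<le> (1 / real n) * (\<Sum>k<n. c * \<gamma> ^ k * V x + (c * B + d))"
    unfolding savg_def using npos by (intro mult_left_mono sum_mono each) auto
  also have "\<dots> = (c * V x) * ((\<Sum>k<n. \<gamma> ^ k) / real n) + (c * B + d)"
    using npos by (simp add: sum.distrib sum_distrib_left sum_distrib_right field_simps)
  also have "\<dots> \<le> (c * V x) * (1/2) + (c * B + d)"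
    using gsum c V0[OF x] by (intro add_right_mono mult_left_mono) auto
  finally show "savg P n g x \<le> c * (1/2 * V x + b / (1 - \<gamma>)) + d"
    unfolding B_def by (simp add: algebra_simps)
qed

lemma funpow_superlevel_set_le:
  assumes P: "markov_operator M P" and dr: "drift M P V \<gamma> (\<lambda>_. b)" and g0: "0 \<le> \<gamma>" and b0: "0 \<le> b"
    and V: "V \<in> borel_measurable M" and V0: "\<And>x. x \<in> space M \<Longrightarrow> 0 \<le> V x"
    and L: "0 < L" and z: "z \<in> space M"
  shows "(P ^^ k) (indicator {x \<in> space M. L < V x}) z \<le> (\<gamma> ^ k * V z + b * (\<Sum>j<k. \<gamma> ^ j)) / L"
proof -
  have "{x \<in> space M. L < V x} \<in> sets M" using V by measurable
  then have "(P ^^ k) (indicator {x \<in> space M. L < V x}) z \<le> (1/L) * (\<gamma> ^ k * V z + b * (\<Sum>j<k. \<gamma> ^ j)) + 0"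
    using L V0 by (intro driftD[OF drift_funpow[OF P dr g0 b0] _ _ bounded_measurable_indicator _ _ z])
      (auto simp: indicator_def field_simps)
  then show ?thesis by simp
qed

section \<open>Lower bounds on the time spent in a set\<close>

text \<open>\<open>min V L\<close> is a bounded substitute for \<open>V\<close> that still satisfies the drift inequality,
  up to a correction on \<open>[V > L]\<close>.\<close>
lemma drift_truncation:
  assumes P: "markov_operator M P" and dr: "drift M P V \<gamma> h"
    and V: "V \<in> borel_measurable M" and V0: "\<And>x. x \<in> space M \<Longrightarrow> 0 \<le> V x" and L: "0 < L"
    and c: "\<And>z. z \<in> space M \<Longrightarrow> (1 - \<gamma>) * L \<le> c + h z" and z: "z \<in> space M"
  shows "P (\<lambda>z. min (V z) L) z \<le> \<gamma> * min (V z) L + (h z + c * indicator {x \<in> space M. L < V x} z)"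
proof -
  have u: "bounded_measurable M (\<lambda>z. min (V z) L)"
    using bounded_measurable_truncation[OF V V0] L by simp
  have "P (\<lambda>z. min (V z) L) z \<le> 1 * (\<gamma> * V z + h z) + 0"
    using V0 L by (intro driftD[OF dr _ _ u _ _ z]) auto
  moreover have "P (\<lambda>z. min (V z) L) z \<le> L"
    by (rule markov_operator_le_const[OF P u _ z]) simp
  ultimately show ?thesis
    using c[OF z] z by (cases "V z \<le> L") (auto simp: algebra_simps)
qed

lemma sum_funpow_telescope:
  assumes P: "markov_operator M P" and u: "bounded_measurable M u" and u0: "\<And>z. z \<in> space M \<Longrightarrow> 0 \<le> u z"
    and w: "bounded_measurable M w" and le: "\<And>z. z \<in> space M \<Longrightarrow> P u z \<le> \<gamma> * u z + w z"
    and y: "y \<in> space M"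
  shows "(\<Sum>k<m. (P ^^ k) u y) - u y \<le> \<gamma> * (\<Sum>k<m. (P ^^ k) u y) + (\<Sum>k<m. (P ^^ k) w y)"
proof -
  have step: "(P ^^ Suc k) u y \<le> \<gamma> * (P ^^ k) u y + (P ^^ k) w y" for k
  proof -
    note Pk = markov_operator_funpow[OF P, of k]
    have "(P ^^ Suc k) u y = (P ^^ k) (P u) y" by (simp add: funpow_Suc_right del: funpow.simps)
    also have "\<dots> \<le> (P ^^ k) (\<lambda>z. \<gamma> * u z + 1 * w z) y"
      using le u w by (intro markov_operator_mono[OF Pk markov_operator_closed[OF P u] _ _ y]
          bounded_measurable_add bounded_measurable_cmult) simp_all
    also have "\<dots> = \<gamma> * (P ^^ k) u y + (P ^^ k) w y"
      using markov_operator_lincomb[OF Pk u w y, of \<gamma> 1] by simp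
    finally show ?thesis .
  qed
  have "(\<Sum>k<m. (P ^^ k) u y) - u y \<le> (\<Sum>k<Suc m. (P ^^ k) u y) - u y"
    using markov_operator_nonneg[OF markov_operator_funpow[OF P] u u0 y, of m] by simp
  also have "\<dots> = (\<Sum>k<m. (P ^^ Suc k) u y)"
    by (subst sum.lessThan_Suc_shift) simp
  also have "\<dots> \<le> (\<Sum>k<m. \<gamma> * (P ^^ k) u y + (P ^^ k) w y)"
    by (intro sum_mono step)
  also have "\<dots> = \<gamma> * (\<Sum>k<m. (P ^^ k) u y) + (\<Sum>k<m. (P ^^ k) w y)"
    by (simp add: sum.distrib sum_distrib_left)
  finally show ?thesis .
qed

lemma funpow_sublevel_set_eventually_ge:
  assumes P: "markov_operator M P" and dr: "drift M P V \<gamma> (\<lambda>_. b)" and g: "0 < \<gamma>" "\<gamma> < 1" and b: "0 \<le> b"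
    and V: "V \<in> borel_measurable M" and V0: "\<And>x. x \<in> space M \<Longrightarrow> 0 \<le> V x"
    and r: "b / (1 - \<gamma>) < r"
  shows "\<exists>k0. \<forall>k\<ge>k0. \<forall>z\<in>space M. V z < N \<longrightarrow>
           (r - b / (1 - \<gamma>)) / (2 * r) \<le> (P ^^ k) (indicator {x \<in> space M. V x \<le> r}) z"
proof -
  define B where "B = b / (1 - \<gamma>)"
  define \<epsilon> where "\<epsilon> = (r - B) / 2"
  have B0: "0 \<le> B" unfolding B_def using b g by simp
  have r0: "0 < r" using r B0 unfolding B_def by linarith
  have e0: "0 < \<epsilon>" unfolding \<epsilon>_def B_def using r by simp
  obtain k0 where k0: "\<gamma> ^ k0 < \<epsilon> / (\<bar>N\<bar> + 1)"
    using real_arch_pow_inv[of "\<epsilon> / (\<bar>N\<bar> + 1)" \<gamma>] e0 g by auto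
  have Gt: "{x \<in> space M. r < V x} \<in> sets M" using V by measurable
  have Cs: "{x \<in> space M. V x \<le> r} = space M - {x \<in> space M. r < V x}" by auto
  show ?thesis
  proof (intro exI[of _ k0] allI impI ballI)
    fix k z assume k: "k0 \<le> k" and z: "z \<in> space M" and Vz: "V z < N"
    have "\<gamma> ^ k * V z \<le> \<gamma> ^ k0 * (\<bar>N\<bar> + 1)"
      using V0[OF z] g k Vz by (intro mult_mono power_decreasing) auto
    also have "\<dots> < \<epsilon>" using k0 by (simp add: field_simps)
    finally have gk: "\<gamma> ^ k * V z < \<epsilon>" .
    have sb: "b * (\<Sum>j<k. \<gamma> ^ j) \<le> B"
      unfolding B_def using sum_power_le_inverse_one_minus[of \<gamma> k] g b
      by (simp add: mult_left_mono divide_inverse)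
    have "(P ^^ k) (indicator {x \<in> space M. r < V x}) z \<le> (\<gamma> ^ k * V z + b * (\<Sum>j<k. \<gamma> ^ j)) / r"
      using g by (intro funpow_superlevel_set_le[OF P dr _ b V V0 r0 z]) simp
    also have "\<dots> \<le> (\<epsilon> + B) / r" using gk sb r0 by (intro divide_right_mono) auto
    finally have "1 - (\<epsilon> + B) / r \<le> (P ^^ k) (indicator {x \<in> space M. V x \<le> r}) z"
      unfolding Cs using markov_operator_indicator_compl[OF markov_operator_funpow[OF P] Gt z] by simp
    moreover have "1 - (\<epsilon> + B) / r = (r - B) / (2 * r)" unfolding \<epsilon>_def using r0 by (simp add: field_simps)
    ultimately show "(r - b / (1 - \<gamma>)) / (2 * r) \<le> (P ^^ k) (indicator {x \<in> space M. V x \<le> r}) z"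
      unfolding B_def by simp
  qed
qed

text \<open>As \<open>V \<ge> 1\<close>, \<open>min V L\<close> dominates the indicator of \<open>[V \<le> L]\<close> plus \<open>L\<close> times that of \<open>[V > L]\<close>.\<close>
lemma funpow_truncation_ge_half:
  assumes P: "markov_operator M P" and V: "V \<in> borel_measurable M" and V1: "\<And>x. x \<in> space M \<Longrightarrow> 1 \<le> V x"
    and L: "0 \<le> L" and y: "y \<in> space M"
    and small: "(P ^^ k) (indicator {x \<in> space M. L < V x}) y \<le> 1/2"
  shows "1/2 \<le> (P ^^ k) (\<lambda>z. min (V z) L) y - L * (P ^^ k) (indicator {x \<in> space M. L < V x}) y"
proof -
  note Pk = markov_operator_funpow[OF P, of k]
  define Gt where "Gt = {x \<in> space M. L < V x}"
  have Gt: "Gt \<in> sets M" unfolding Gt_def using V by measurable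
  have u: "bounded_measurable M (\<lambda>z. min (V z) L)"
    using bounded_measurable_truncation[OF V _ L] V1 by (meson order_trans zero_le_one)
  have "(P ^^ k) (indicator (space M - Gt)) y \<le> (P ^^ k) (\<lambda>z. 1 * min (V z) L + (-L) * indicator Gt z) y"
    using V1 Gt u by (intro markov_operator_mono[OF Pk] bounded_measurable_add
        bounded_measurable_cmult bounded_measurable_indicator y) (auto simp: Gt_def indicator_def)
  also have "\<dots> = (P ^^ k) (\<lambda>z. min (V z) L) y - L * (P ^^ k) (indicator Gt) y"
    using markov_operator_lincomb[OF Pk u bounded_measurable_indicator[OF Gt] y, of 1 "-L"] by simp
  finally show ?thesis
    using markov_operator_indicator_compl[OF Pk Gt y] small unfolding Gt_def by simp
qed

lemma sum_funpow_small_set_lower_bound: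
  assumes P: "markov_operator M P" and dr: "drift M P V \<gamma> (\<lambda>z. b * indicator S z)" and g: "0 < \<gamma>" "\<gamma> < 1"
    and b: "1 \<le> b" and S: "S \<in> sets M"
    and V: "V \<in> borel_measurable M" and V1: "\<And>x. x \<in> space M \<Longrightarrow> 1 \<le> V x"
    and y: "y \<in> space M" and Vy: "V y < N"
  shows "(1 - \<gamma>) * real m / 2 - N \<le> b * (\<Sum>k<m. (P ^^ k) (indicator S) y)"
proof -
  have V0: "\<And>x. x \<in> space M \<Longrightarrow> 0 \<le> V x" using V1 by (meson order_trans zero_le_one)
  have drc: "drift M P V \<gamma> (\<lambda>_. b)"
    by (rule drift_mono[OF dr]) (use b in \<open>auto simp: indicator_def\<close>)
  define B where "B = b / (1 - \<gamma>)"
  have B0: "0 \<le> B" unfolding B_def using b g by simp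
  \<comment> \<open>large enough that each \<open>P\<^sup>k 1\<^bsub>[V > L]\<^esub> y \<le> 1/2\<close>, by Markov's inequality\<close>
  define L where "L = 2 * (\<bar>N\<bar> + B) + 1"
  have L0: "0 < L" unfolding L_def using B0 by simp
  define Gt where "Gt = {x \<in> space M. L < V x}"
  have Gt: "Gt \<in> sets M" unfolding Gt_def using V by measurable
  define u where "u = (\<lambda>z. min (V z) L)"
  have u: "bounded_measurable M u" unfolding u_def using bounded_measurable_truncation[OF V V0] L0 by simp
  have u0: "\<And>z. z \<in> space M \<Longrightarrow> 0 \<le> u z" unfolding u_def using V0 L0 by simp
  define w where "w = (\<lambda>z. b * indicator S z + ((1 - \<gamma>) * L) * indicator Gt z)"
  have w: "bounded_measurable M w"
    unfolding w_def
    by (intro bounded_measurable_add bounded_measurable_cmult bounded_measurable_indicator S Gt)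
  have trunc: "P u z \<le> \<gamma> * u z + w z" if "z \<in> space M" for z
    unfolding u_def w_def Gt_def using b
    by (intro drift_truncation[OF P dr V V0 L0 _ that]) auto
  define A where "A = (\<Sum>k<m. (P ^^ k) u y)"
  define I where "I = (\<Sum>k<m. (P ^^ k) (indicator S) y)"
  define J where "J = (\<Sum>k<m. (P ^^ k) (indicator Gt) y)"
  from sum_funpow_telescope[OF P u u0 w trunc y, of m]
  have tel: "A - u y \<le> \<gamma> * A + (b * I + ((1 - \<gamma>) * L) * J)"
    unfolding A_def I_def J_def w_def
    using sum_funpow_lincomb[OF P bounded_measurable_indicator[OF S] bounded_measurable_indicator[OF Gt] y]
    by simp
  have half: "1/2 \<le> (P ^^ k) u y - L * (P ^^ k) (indicator Gt) y" for k
  proof -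
    have "(P ^^ k) (indicator Gt) y \<le> (\<gamma> ^ k * V y + b * (\<Sum>j<k. \<gamma> ^ j)) / L"
      unfolding Gt_def using g b by (intro funpow_superlevel_set_le[OF P drc _ _ V V0 L0 y]) auto
    also have "\<dots> \<le> (\<bar>N\<bar> + B) / L"
    proof (intro divide_right_mono add_mono)
      have "\<gamma> ^ k * V y \<le> 1 * V y"
        using V0[OF y] g by (intro mult_right_mono power_le_one) auto
      then show "\<gamma> ^ k * V y \<le> \<bar>N\<bar>" using Vy by simp
      show "b * (\<Sum>j<k. \<gamma> ^ j) \<le> B"
        unfolding B_def using sum_power_le_inverse_one_minus[of \<gamma> k] g b
        by (simp add: mult_left_mono divide_inverse)
    qed (use L0 in auto)
    also have "\<dots> \<le> 1/2" unfolding L_def using B0 by (simp add: field_simps)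
    finally have "(P ^^ k) (indicator Gt) y \<le> 1/2" .
    then show ?thesis
      unfolding u_def Gt_def using L0 by (intro funpow_truncation_ge_half[OF P V V1 _ y]) auto
  qed
  have "real m / 2 \<le> A - L * J"
    using sum_mono[of "{..<m}" "\<lambda>_. 1/2" "\<lambda>k. (P ^^ k) u y - L * (P ^^ k) (indicator Gt) y"] half
    unfolding A_def J_def by (simp add: sum_subtractf sum_distrib_left)
  then have "(1 - \<gamma>) * (real m / 2) \<le> (1 - \<gamma>) * (A - L * J)"
    using g by (intro mult_left_mono) auto
  moreover have "(1 - \<gamma>) * (A - L * J) = A - \<gamma> * A - (1 - \<gamma>) * L * J" by (simp add: algebra_simps)
  moreover have "u y \<le> N" using Vy by (simp add: u_def)
  ultimately show ?thesis using tel unfolding I_def by linarith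
qed

lemma cesaro_small_set_eventually_ge:
  assumes P: "markov_operator M P" and dr: "drift M P V \<gamma> (\<lambda>z. b * indicator S z)" and g: "0 < \<gamma>" "\<gamma> < 1"
    and b: "1 \<le> b" and S: "S \<in> sets M"
    and V: "V \<in> borel_measurable M" and V1: "\<And>x. x \<in> space M \<Longrightarrow> 1 \<le> V x"
  shows "\<exists>n0. 0 < n0 \<and> (\<forall>n\<ge>n0. \<forall>z\<in>space M. V z < N \<longrightarrow>
           (1 - \<gamma>) / (4 * b) \<le> (1 / real n) * (\<Sum>k<n - 1. (P ^^ k) (indicator S) z))"
proof (intro exI[of _ "nat \<lceil>4 * \<bar>N\<bar> / (1 - \<gamma>)\<rceil> + 3"] conjI allI impI ballI)
  fix n z assume n: "nat \<lceil>4 * \<bar>N\<bar> / (1 - \<gamma>)\<rceil> + 3 \<le> n" and z: "z \<in> space M" and Vz: "V z < N"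
  have "4 * \<bar>N\<bar> / (1 - \<gamma>) \<le> real n - 3" using n by linarith
  then have "4 * \<bar>N\<bar> \<le> (1 - \<gamma>) * (real n - 2)" using g by (simp add: field_simps)
  moreover have "(1 - \<gamma>) * real (n - 1) / 2 - N \<le> b * (\<Sum>k<n - 1. (P ^^ k) (indicator S) z)"
    by (rule sum_funpow_small_set_lower_bound[OF P dr g b S V V1 z Vz])
  moreover have "real (n - 1) = real n - 1" using n by simp
  ultimately have "(1 - \<gamma>) * real n / 4 \<le> b * (\<Sum>k<n - 1. (P ^^ k) (indicator S) z)"
    by (simp add: algebra_simps)
  moreover have "0 < real n" using n by simp
  ultimately show "(1 - \<gamma>) / (4 * b) \<le> (1 / real n) * (\<Sum>k<n - 1. (P ^^ k) (indicator S) z)"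
    using b by (simp add: field_simps)
qed simp

lemma sum_funpow_recurrent_set_lower_bound:
  assumes P: "markov_operator M P" and dr: "drift M P V 1 (\<lambda>z. b * indicator C z - 1)"
    and b: "1 \<le> b" and C: "C \<in> sets M"
    and V: "V \<in> borel_measurable M" and V0: "\<And>x. x \<in> space M \<Longrightarrow> 0 \<le> V x"
    and y: "y \<in> space M"
  shows "real n - 1/2 - V y \<le> b * (\<Sum>k<n. (P ^^ k) (indicator C) y)"
proof -
  have drc: "drift M P V 1 (\<lambda>_. b)"
    by (rule drift_mono[OF dr]) (use b in \<open>auto simp: indicator_def\<close>)
  \<comment> \<open>large enough that \<open>\<Sum>\<^bsub>k<n\<^esub> P\<^sup>k 1\<^bsub>[V > L]\<^esub> y \<le> 1/2\<close>, by Markov's inequality\<close>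
  define L where "L = 2 * real n * (V y + b * real n) + 1"
  have "0 \<le> 2 * real n * (V y + b * real n)" using V0[OF y] b by simp
  then have L0: "0 < L" unfolding L_def by linarith
  define Gt where "Gt = {x \<in> space M. L < V x}"
  have Gt: "Gt \<in> sets M" unfolding Gt_def using V by measurable
  define u where "u = (\<lambda>z. min (V z) L)"
  have u: "bounded_measurable M u" unfolding u_def using bounded_measurable_truncation[OF V V0] L0 by simp
  have u0: "\<And>z. z \<in> space M \<Longrightarrow> 0 \<le> u z" unfolding u_def using V0 L0 by simp
  define w where "w = (\<lambda>z. b * indicator C z + 1 * (indicator Gt z - 1))"
  have Gt1: "bounded_measurable M (\<lambda>z. indicator Gt z - 1)"
    by (intro bounded_measurable_diff bounded_measurable_indicator Gt bounded_measurable_const)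
  have w: "bounded_measurable M w"
    unfolding w_def
    by (intro bounded_measurable_add bounded_measurable_cmult bounded_measurable_indicator C Gt1)
  have trunc: "P u z \<le> 1 * u z + w z" if "z \<in> space M" for z
    using drift_truncation[OF P dr V V0 L0 _ that, of 1] b
    unfolding u_def w_def Gt_def by (simp add: algebra_simps)
  note tel = sum_funpow_telescope[OF P u u0 w trunc y, of n]
  have wsum: "(\<Sum>k<n. (P ^^ k) w y) =
      b * (\<Sum>k<n. (P ^^ k) (indicator C) y) + (\<Sum>k<n. (P ^^ k) (indicator Gt) y - 1)"
    unfolding w_def sum_funpow_lincomb[OF P bounded_measurable_indicator[OF C] Gt1 y]
    using markov_operator_diff[OF markov_operator_funpow[OF P] bounded_measurable_indicator[OF Gt]
        bounded_measurable_const y] markov_operator_const[OF markov_operator_funpow[OF P] y]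
    by simp
  have "(P ^^ k) (indicator Gt) y \<le> (V y + b * real n) / L" if "k < n" for k
  proof -
    have "(P ^^ k) (indicator Gt) y \<le> (1 ^ k * V y + b * (\<Sum>j<k. 1 ^ j)) / L"
      unfolding Gt_def using b by (intro funpow_superlevel_set_le[OF P drc _ _ V V0 L0 y]) auto
    also have "\<dots> \<le> (V y + b * real n) / L"
      using that b L0 by (intro divide_right_mono) auto
    finally show ?thesis .
  qed
  then have "(\<Sum>k<n. (P ^^ k) (indicator Gt) y) \<le> real n * ((V y + b * real n) / L)"
    using sum_mono[of "{..<n}" "\<lambda>k. (P ^^ k) (indicator Gt) y" "\<lambda>_. (V y + b * real n) / L"] by simp
  also have "\<dots> \<le> 1/2"
    using L0 V0[OF y] b unfolding L_def by (simp add: field_simps)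
  finally have "(\<Sum>k<n. (P ^^ k) (indicator Gt) y) \<le> 1/2" .
  moreover have "u y \<le> V y" by (simp add: u_def)
  ultimately show ?thesis using tel unfolding wsum by (simp add: sum_subtractf)
qed

lemma cesaro_recurrent_set_eventually_ge:
  assumes P: "markov_operator M P" and dr: "drift M P V 1 (\<lambda>z. b * indicator C z - 1)"
    and b: "1 \<le> b" and C: "C \<in> sets M"
    and V: "V \<in> borel_measurable M" and V0: "\<And>x. x \<in> space M \<Longrightarrow> 0 \<le> V x"
  shows "\<exists>n0::nat. 0 < n0 \<and> (\<forall>n\<ge>n0. \<forall>z\<in>space M. V z < N \<longrightarrow> 1 / (2 * b) \<le> savg P n (indicator C) z)"
proof (intro exI[of _ "nat \<lceil>2 * \<bar>N\<bar>\<rceil> + 2"] conjI allI impI ballI)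
  fix n z assume n: "nat \<lceil>2 * \<bar>N\<bar>\<rceil> + 2 \<le> n" and z: "z \<in> space M" and Vz: "V z < N"
  have "real n - 1/2 - V z \<le> b * (\<Sum>k<n. (P ^^ k) (indicator C) z)"
    by (rule sum_funpow_recurrent_set_lower_bound[OF P dr b C V V0 z])
  then have "real n / 2 \<le> b * (\<Sum>k<n. (P ^^ k) (indicator C) z)" using n Vz by linarith
  moreover have "0 < real n" using n by simp
  ultimately show "1 / (2 * b) \<le> savg P n (indicator C) z"
    unfolding savg_def using b by (simp add: field_simps)
qed simp

section \<open>Minorization\<close>

lemma sandwich_weaken:
  fixes \<alpha> a c t u :: real
  assumes "0 \<le> \<alpha>" "0 \<le> a" "a \<le> 1" "c \<le> t" "\<alpha> * a * t \<le> u" "u \<le> 1 - \<alpha> * (1 - a) * t"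
  shows "\<alpha> * c * a \<le> u" "u \<le> \<alpha> * c * a + (1 - \<alpha> * c)"
proof -
  have "\<alpha> * a * c \<le> \<alpha> * a * t" "\<alpha> * (1 - a) * c \<le> \<alpha> * (1 - a) * t"
    using assms by (intro mult_left_mono; simp)+
  then show "\<alpha> * c * a \<le> u" "u \<le> \<alpha> * c * a + (1 - \<alpha> * c)"
    using assms(5,6) by (simp_all add: algebra_simps)
qed

locale minorized_markov_operator =
  fixes M P \<nu> C \<alpha>
  assumes markov: "markov_operator M P" and nu: "prob_space \<nu>" "sets \<nu> = sets M" and C: "C \<in> sets M"
    and minor: "\<And>f x. f \<in> B1p M \<Longrightarrow> x \<in> C \<Longrightarrow> \<alpha> * (\<integral>y. f y \<partial>\<nu>) \<le> P f x"
    and nonneg: "0 \<le> \<alpha>"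
begin

lemma minorization_sandwich:
  assumes f: "f \<in> B1p M" and z: "z \<in> space M"
  shows "\<alpha> * (\<integral>y. f y \<partial>\<nu>) * indicator C z \<le> P f z"
    "P f z \<le> 1 - \<alpha> * (1 - (\<integral>y. f y \<partial>\<nu>)) * indicator C z"
proof -
  have fb: "bounded_measurable M f" by (rule B1p_bounded_measurable[OF f])
  show "\<alpha> * (\<integral>y. f y \<partial>\<nu>) * indicator C z \<le> P f z"
    using minor[OF f] markov_operator_nonneg[OF markov fb _ z] B1pD[OF f] by (cases "z \<in> C") auto
  have "P (\<lambda>z. 1 - f z) z = 1 - P f z"
    using markov_operator_diff[OF markov bounded_measurable_const fb z] markov_operator_const[OF markov z]
    by simp
  then show "P f z \<le> 1 - \<alpha> * (1 - (\<integral>y. f y \<partial>\<nu>)) * indicator C z"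
    using minor[OF B1p_one_minus[OF f], of z] integral_B1p_one_minus[OF nu f]
      markov_operator_le_const[OF markov fb _ z, of 1] B1pD[OF f]
    by (cases "z \<in> C") auto
qed

lemma funpow_sandwich:
  assumes f: "f \<in> B1p M" and y: "y \<in> space M"
  shows "\<alpha> * (\<integral>y. f y \<partial>\<nu>) * (P ^^ k) (indicator C) y \<le> (P ^^ k) (P f) y"
    "(P ^^ k) (P f) y \<le> 1 - \<alpha> * (1 - (\<integral>y. f y \<partial>\<nu>)) * (P ^^ k) (indicator C) y"
  using markov_operator_sandwich[OF markov_operator_funpow[OF markov] y
      markov_operator_closed[OF markov B1p_bounded_measurable[OF f]] C minorization_sandwich[OF f]]
  by simp_all

lemma funpow_bounds:
  assumes f: "f \<in> B1p M" and y: "y \<in> space M" and n: "0 < n"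
    and c: "c \<le> (P ^^ (n - 1)) (indicator C) y"
  shows "\<alpha> * c * (\<integral>y. f y \<partial>\<nu>) \<le> (P ^^ n) f y"
    "(P ^^ n) f y \<le> \<alpha> * c * (\<integral>y. f y \<partial>\<nu>) + (1 - \<alpha> * c)"
proof -
  obtain m where m: "n = Suc m" using n gr0_implies_Suc by blast
  have eq: "(P ^^ n) f y = (P ^^ (n - 1)) (P f) y"
    unfolding m by (simp add: funpow_Suc_right del: funpow.simps)
  show "\<alpha> * c * (\<integral>y. f y \<partial>\<nu>) \<le> (P ^^ n) f y"
    "(P ^^ n) f y \<le> \<alpha> * c * (\<integral>y. f y \<partial>\<nu>) + (1 - \<alpha> * c)"
    unfolding eq
    by (rule sandwich_weaken[OF nonneg integral_B1p_nonneg[OF nu f] integral_B1p_le_one[OF nu f] c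
          funpow_sandwich[OF f y]])+
qed

lemma savg_bounds:
  assumes f: "f \<in> B1p M" and y: "y \<in> space M" and n: "0 < n"
    and c: "c \<le> (1 / real n) * (\<Sum>k<n - 1. (P ^^ k) (indicator C) y)"
  shows "\<alpha> * c * (\<integral>y. f y \<partial>\<nu>) \<le> savg P n f y"
    "savg P n f y \<le> \<alpha> * c * (\<integral>y. f y \<partial>\<nu>) + (1 - \<alpha> * c)"
proof -
  define a where "a = (\<integral>y. f y \<partial>\<nu>)"
  define T where "T = (\<Sum>k<n - 1. (P ^^ k) (indicator C) y)"
  define R where "R = (\<Sum>k<n - 1. (P ^^ k) (P f) y)"
  have eq: "savg P n f y = (1 / real n) * (f y + R)"
  proof -
    have "(\<Sum>k<n. (P ^^ k) f y) = (\<Sum>k<Suc (n - 1). (P ^^ k) f y)" using n by simp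
    also have "\<dots> = f y + R"
      unfolding R_def by (subst sum.lessThan_Suc_shift) (simp add: funpow_Suc_right del: funpow.simps)
    finally show ?thesis unfolding savg_def by simp
  qed
  have fy: "0 \<le> f y" "f y \<le> 1" using B1pD[OF f y] by auto
  have "\<alpha> * a * T \<le> R"
    unfolding T_def R_def a_def sum_distrib_left by (intro sum_mono funpow_sandwich(1)[OF f y])
  then have "(1 / real n) * (\<alpha> * a * T) \<le> savg P n f y"
    unfolding eq using fy by (intro mult_left_mono) auto
  then have lo: "\<alpha> * a * ((1 / real n) * T) \<le> savg P n f y" by (simp add: mult_ac)
  have "R \<le> (\<Sum>k<n - 1. 1 - \<alpha> * (1 - a) * (P ^^ k) (indicator C) y)"
    unfolding R_def a_def by (intro sum_mono funpow_sandwich(2)[OF f y])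
  also have "\<dots> = real (n - 1) - \<alpha> * (1 - a) * T"
    unfolding T_def by (simp add: sum_subtractf sum_distrib_left)
  finally have "f y + R \<le> real n - \<alpha> * (1 - a) * T" using fy n by (simp add: of_nat_diff)
  then have "savg P n f y \<le> (1 / real n) * (real n - \<alpha> * (1 - a) * T)"
    unfolding eq by (intro mult_left_mono) auto
  also have "\<dots> = 1 - \<alpha> * (1 - a) * ((1 / real n) * T)"
    using n by (simp add: right_diff_distrib)
  finally have hi: "savg P n f y \<le> 1 - \<alpha> * (1 - a) * ((1 / real n) * T)" .
  show "\<alpha> * c * (\<integral>y. f y \<partial>\<nu>) \<le> savg P n f y" "savg P n f y \<le> \<alpha> * c * (\<integral>y. f y \<partial>\<nu>) + (1 - \<alpha> * c)"
    by (rule sandwich_weaken[OF nonneg integral_B1p_nonneg[OF nu f] integral_B1p_le_one[OF nu f]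
          c[folded T_def] lo[unfolded a_def] hi[unfolded a_def]])+
qed

end

lemma small_set_minorized_markov_operator:
  assumes K: "markov_kernel M K" and S: "small_set M K S"
  obtains \<alpha> \<nu> where "0 < \<alpha>" "\<alpha> \<le> 1" "minorized_markov_operator M (kop K) \<nu> S \<alpha>"
proof -
  have SM: "S \<in> sets M" using S unfolding small_set_def by simp
  obtain \<alpha> \<nu> where a: "0 < \<alpha>" "\<alpha> \<le> 1" and nu: "prob_space \<nu>" "sets \<nu> = sets M"
    and le: "\<forall>x\<in>S. \<forall>A\<in>sets M. \<alpha> * measure \<nu> A \<le> measure (K x) A"
    using S unfolding small_set_def by (elim conjE exE) (rule that)
  have "minorized_markov_operator M (kop K) \<nu> S \<alpha>"
  proof (rule minorized_markov_operator.intro[OF markov_operator_kop[OF K] nu SM])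
    fix f x assume f: "f \<in> B1p M" and x: "x \<in> S"
    have "x \<in> space M" using sets.sets_into_space[OF SM] x by blast
    then show "\<alpha> * (\<integral>y. f y \<partial>\<nu>) \<le> kop K f x"
      using a le x by (intro kop_minorization[OF K _ nu _ _ f]) auto
  qed (use a in simp)
  with a show ?thesis by (rule that)
qed

lemma assmA_drift_minorization:
  assumes K: "markov_kernel M K" and A: "assmA M K V"
  obtains b \<gamma> r \<alpha> \<nu> where "V \<in> borel_measurable M" "\<And>x. x \<in> space M \<Longrightarrow> 0 \<le> V x" "0 \<le> b"
    "0 < \<gamma>" "\<gamma> < 1" "b / (1 - \<gamma>) < r" "0 < \<alpha>" "\<alpha> \<le> 1"
    "minorized_markov_operator M (kop K) \<nu> {x \<in> space M. V x \<le> r} \<alpha>" "drift M (kop K) V \<gamma> (\<lambda>_. b)"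
proof -
  have V: "V \<in> borel_measurable M" and V0: "\<And>x. x \<in> space M \<Longrightarrow> 0 \<le> V x"
    using A unfolding assmA_def by simp_all
  obtain b \<gamma> r where b: "0 \<le> b" and g: "0 < \<gamma>" "\<gamma> < 1"
    and dr: "\<forall>x\<in>space M. (\<integral>\<^sup>+ y. ennreal (V y) \<partial>K x) \<le> ennreal (\<gamma> * V x + b)"
    and r: "2 * b / (1 - \<gamma>) < r" and sm: "small_set M K {x \<in> space M. V x \<le> r}"
    using A unfolding assmA_def by (elim conjE exE) (rule that)
  have "0 \<le> b / (1 - \<gamma>)" using b g by simp
  then have r': "b / (1 - \<gamma>) < r" using r by (simp add: mult_divide_mult_cancel_left_if)
  obtain \<alpha> \<nu> where a: "0 < \<alpha>" "\<alpha> \<le> 1"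
    and mo: "minorized_markov_operator M (kop K) \<nu> {x \<in> space M. V x \<le> r} \<alpha>"
    using small_set_minorized_markov_operator[OF K sm] .
  have dr': "drift M (kop K) V \<gamma> (\<lambda>_. b)"
    using V0 g b dr by (intro drift_kop[OF K V]) auto
  show ?thesis by (rule that[OF V V0 b g r' a mo dr'])
qed

lemma assmA'_drift_minorization:
  assumes K: "markov_kernel M K" and A: "assmA' M K V"
  obtains b \<gamma> S \<alpha> \<nu> where "V \<in> borel_measurable M" "\<And>x. x \<in> space M \<Longrightarrow> 1 \<le> V x" "1 \<le> b"
    "0 < \<gamma>" "\<gamma> < 1" "0 < \<alpha>" "\<alpha> \<le> 1"
    "minorized_markov_operator M (kop K) \<nu> S \<alpha>" "S \<in> sets M" "drift M (kop K) V \<gamma> (\<lambda>z. b * indicator S z)"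
proof -
  have V: "V \<in> borel_measurable M" and V1: "\<And>x. x \<in> space M \<Longrightarrow> 1 \<le> V x"
    using A unfolding assmA'_def by simp_all
  obtain b \<gamma> S where b: "0 \<le> b" and g: "0 < \<gamma>" "\<gamma> < 1" and sm: "small_set M K S"
    and dr: "\<forall>x\<in>space M. (\<integral>\<^sup>+ y. ennreal (V y) \<partial>K x) \<le> ennreal (\<gamma> * V x + b * indicator S x)"
    using A unfolding assmA'_def by (elim conjE exE) (rule that)
  obtain \<alpha> \<nu> where a: "0 < \<alpha>" "\<alpha> \<le> 1" and mo: "minorized_markov_operator M (kop K) \<nu> S \<alpha>"
    using small_set_minorized_markov_operator[OF K sm] .
  have S: "S \<in> sets M" using sm unfolding small_set_def by simp
  have V0: "0 \<le> V x" if "x \<in> space M" for x using V1[OF that] by simp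
  have "drift M (kop K) V \<gamma> (\<lambda>z. b * indicator S z)"
    using V0 g b dr by (intro drift_kop[OF K V]) auto
  then have dr': "drift M (kop K) V \<gamma> (\<lambda>z. max b 1 * indicator S z)"
    by (rule drift_mono) (auto simp: indicator_def)
  have b1: "1 \<le> max b 1" by simp
  show ?thesis by (rule that[OF V V1 b1 g a mo S dr'])
qed

lemma ennreal_add_one_leD:
  fixes X :: ennreal
  assumes "X + 1 \<le> ennreal t"
  shows "1 \<le> t" "X \<le> ennreal (t - 1)"
proof -
  have "1 \<le> ennreal t" using order_trans[OF add_increasing[OF zero_le order_refl] assms] .
  then show t1: "1 \<le> t" by simp
  have "ennreal t = 1 + ennreal (t - 1)" using t1 ennreal_plus[of 1 "t - 1"] by simp
  then show "X \<le> ennreal (t - 1)" using assms by (simp add: add.commute ennreal_add_left_cancel_le)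
qed

lemma drift_of_assmB:
  assumes K: "markov_kernel M K" and B: "assmB M K V b C"
  shows "drift M (kop K) V 1 (\<lambda>z. max b 1 * indicator C z - 1)"
proof (rule drift_kop[OF K])
  fix x assume x: "x \<in> space M"
  have "V x + b * indicator C x \<le> 1 * V x + (max b 1 * indicator C x - 1) + 1"
    by (simp add: indicator_def)
  then have "(\<integral>\<^sup>+ y. ennreal (V y) \<partial>K x) + 1 \<le> ennreal (1 * V x + (max b 1 * indicator C x - 1) + 1)"
    using B x unfolding assmB_def by (blast intro: order_trans ennreal_leI)
  from ennreal_add_one_leD[OF this]
  show "0 \<le> 1 * V x + (max b 1 * indicator C x - 1)"
    and "(\<integral>\<^sup>+ y. ennreal (V y) \<partial>K x) \<le> ennreal (1 * V x + (max b 1 * indicator C x - 1))"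
    by (simp_all add: add_diff_eq)
qed (use B in \<open>auto simp: assmB_def\<close>)

section \<open>Recurrence into sublevel sets\<close>

lemma sublevel_set_measure_pos:
  fixes V :: "'a \<Rightarrow> real"
  assumes m: "finite_measure m" "sets m = sets M" and V: "V \<in> borel_measurable M"
    and pos: "0 < measure m (space m)"
  obtains N where "0 < measure m {x \<in> space M. V x < N}"
proof -
  interpret finite_measure m by (rule m(1))
  have sp: "space m = space M" using m(2) by (rule sets_eq_imp_space_eq)
  define A where "A = (\<lambda>i::nat. {x \<in> space M. V x < real i})"
  have "A i \<in> sets M" for i unfolding A_def using V by measurable
  then have As: "range A \<subseteq> sets m" using m(2) by auto
  have inc: "incseq A" unfolding A_def incseq_def by auto
  have U: "(\<Union>i. A i) = space m"
  proof
    show "(\<Union>i. A i) \<subseteq> space m" unfolding A_def sp by auto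
    show "space m \<subseteq> (\<Union>i. A i)"
    proof
      fix x assume "x \<in> space m"
      moreover obtain i where "V x < real i" using reals_Archimedean2 by blast
      ultimately show "x \<in> (\<Union>i. A i)" unfolding A_def sp by auto
    qed
  qed
  have "(\<lambda>i. measure m (A i)) \<longlonglongrightarrow> measure m (space m)"
    using finite_Lim_measure_incseq[OF As inc] U by simp
  then have "eventually (\<lambda>i. 0 < measure m (A i)) sequentially"
    using pos by (rule order_tendstoD)
  then obtain i where "0 < measure m (A i)"
    by (metis (mono_tags) eventually_sequentially order_refl)
  then show ?thesis unfolding A_def by (rule that)
qed

lemma INF_integral_pos:
  fixes n0 :: nat
  assumes m: "finite_measure m" "sets m = sets M" and G: "G \<in> sets M" "0 < measure m G"
    and c: "0 < c" and F: "\<And>n. n0 \<le> n \<Longrightarrow> bounded_measurable M (F n)"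
    and F0: "\<And>n z. n0 \<le> n \<Longrightarrow> z \<in> space M \<Longrightarrow> 0 \<le> F n z"
    and Fc: "\<And>n z. n0 \<le> n \<Longrightarrow> z \<in> G \<Longrightarrow> c \<le> F n z"
  shows "0 < (INF n\<in>{n0..}. \<integral>y. F n y \<partial>m)"
proof -
  interpret finite_measure m by (rule m(1))
  have sp: "space m = space M" using m(2) by (rule sets_eq_imp_space_eq)
  have lb: "c * measure m G \<le> (\<integral>y. F n y \<partial>m)" if n: "n0 \<le> n" for n
  proof -
    obtain B where B: "\<forall>x\<in>space M. \<bar>F n x\<bar> \<le> B" and Fm: "F n \<in> borel_measurable M"
      using F[OF n] unfolding bounded_measurable_def by blast
    have "F n \<in> borel_measurable m" using Fm m(2) by (simp cong: measurable_cong_sets)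
    then have iF: "integrable m (F n)" using B sp by (intro integrable_const_bound[of _ B]) auto
    have "c * measure m G = (\<integral>y. c * indicator G y \<partial>m)" using G m(2) by simp
    also have "\<dots> \<le> (\<integral>y. F n y \<partial>m)"
    proof (rule integral_mono[OF _ iF])
      show "integrable m (\<lambda>y. c * indicator G y)"
        using G m(2) emeasure_finite[of G] by (simp add: less_top[symmetric])
      fix y assume "y \<in> space m"
      then show "c * indicator G y \<le> F n y" using Fc[OF n] F0[OF n] sp by (cases "y \<in> G") auto
    qed
    finally show ?thesis .
  qed
  have "c * measure m G \<le> (INF n\<in>{n0..}. \<integral>y. F n y \<partial>m)"
  proof (rule cINF_greatest)
    fix n assume "n \<in> {n0..}"
    then show "c * measure m G \<le> (\<integral>y. F n y \<partial>m)" by (intro lb) simp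
  qed simp
  moreover have "0 < c * measure m G" using c G by simp
  ultimately show ?thesis by linarith
qed

lemma savg_indicator_ge_half:
  assumes Q: "markov_operator M Q" and C: "C \<in> sets M" and z: "z \<in> space M" and c: "0 \<le> c"
    and rec: "\<And>j. j0 \<le> j \<Longrightarrow> c \<le> (Q ^^ j) (indicator C) z" and n: "2 * j0 + 1 \<le> n"
  shows "c / 2 \<le> savg Q n (indicator C) z"
proof -
  have "real (n - j0) * c = (\<Sum>j\<in>{j0..<n}. c)" by simp
  also have "\<dots> \<le> (\<Sum>j\<in>{j0..<n}. (Q ^^ j) (indicator C) z)"
    using rec by (intro sum_mono) simp
  also have "\<dots> \<le> (\<Sum>j<n. (Q ^^ j) (indicator C) z)"
    by (intro sum_mono2
        markov_operator_nonneg[OF markov_operator_funpow[OF Q] bounded_measurable_indicator[OF C] _ z]) auto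
  finally have "real (n - j0) * c \<le> (\<Sum>j<n. (Q ^^ j) (indicator C) z)" .
  moreover have "real n / 2 * c \<le> real (n - j0) * c" using n c by (intro mult_right_mono) auto
  ultimately have "real n / 2 * c \<le> (\<Sum>j<n. (Q ^^ j) (indicator C) z)" by linarith
  then have "(1 / real n) * (real n / 2 * c) \<le> savg Q n (indicator C) z"
    unfolding savg_def by (rule mult_left_mono) simp
  moreover have "(1 / real n) * (real n / 2 * c) = c / 2" using n by simp
  ultimately show ?thesis by simp
qed

text \<open>The witnesses for C' are \<open>m = \<nu>\<close>, \<open>\<phi> t = \<beta> t\<close> and \<open>\<delta> = 1 - \<beta>\<close>.\<close>
lemma assmC'I:
  assumes Q: "markov_operator M Q" and nu: "prob_space \<nu>" "sets \<nu> = sets M" and C: "C \<in> sets M"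
    and \<beta>: "0 < \<beta>" "\<beta> \<le> 1"
    and up: "\<And>f x. f \<in> B1p M \<Longrightarrow> x \<in> C \<Longrightarrow> Q f x \<le> \<beta> * (\<integral>y. f y \<partial>\<nu>) + (1 - \<beta>)"
    and G: "G \<in> sets M" "0 < measure \<nu> G" and c: "0 < c"
    and rec: "\<And>j z. j0 \<le> j \<Longrightarrow> z \<in> G \<Longrightarrow> c \<le> (Q ^^ j) (indicator C) z"
  shows "assmC' M Q"
proof -
  interpret nu: prob_space \<nu> by (rule nu(1))
  have INF_pos: "0 < (INF n\<in>{2 * j0 + 1..}. \<integral>y. savg Q n (indicator C) y \<partial>\<nu>)"
  proof (rule INF_integral_pos[OF nu.finite_measure_axioms nu(2) G])
    fix n assume n: "2 * j0 + 1 \<le> n"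
    then have Qn: "markov_operator M (savg Q n)" by (intro markov_operator_savg[OF Q]) simp
    show "bounded_measurable M (savg Q n (indicator C))"
      by (rule markov_operator_closed[OF Qn bounded_measurable_indicator[OF C]])
    show "\<And>z. z \<in> space M \<Longrightarrow> 0 \<le> savg Q n (indicator C) z"
      by (rule markov_operator_nonneg[OF Qn bounded_measurable_indicator[OF C]]) simp
    fix z assume "z \<in> G"
    then show "c / 2 \<le> savg Q n (indicator C) z"
      using sets.sets_into_space[OF G(1)] c rec n by (intro savg_indicator_ge_half[OF Q C]) auto
  next
    show "0 < c / 2" using c by simp
  qed
  show ?thesis unfolding assmC'_def
  proof (intro exI[of _ \<nu>] exI[of _ C] exI[of _ "\<lambda>t. \<beta> * t"] exI[of _ "1 - \<beta>"] conjI)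
    show "continuous_on {0..} (\<lambda>t::real. \<beta> * t)" by (intro continuous_intros)
    show "\<forall>f\<in>B1p M. \<forall>x\<in>C. Q f x \<le> \<beta> * (\<integral>y. f y \<partial>\<nu>) + (1 - \<beta>)" using up by blast
    show "\<exists>n0::nat. n0 > 0 \<and> (INF n\<in>{n0..}. \<integral>y. savg Q n (indicator C) y \<partial>\<nu>) > 0"
      using INF_pos by (intro exI[of _ "2 * j0 + 1"] conjI) (simp, assumption)
  qed (use nu.finite_measure_axioms nu C \<beta> in simp_all)
qed

lemma assmA_funpow_oscillation:
  assumes K: "markov_kernel M K" and A: "assmA M K V"
  shows "\<exists>n0::nat. n0 > 0 \<and> (\<exists>\<delta>. 0 \<le> \<delta> \<and> \<delta> < 1 \<and>
          (\<forall>n n' x y f. n0 \<le> n \<longrightarrow> n0 \<le> n' \<longrightarrow>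
             x \<in> {z\<in>space M. V z < N} \<longrightarrow> y \<in> {z\<in>space M. V z < N} \<longrightarrow> f \<in> B1p M \<longrightarrow>
             (kop K ^^ n) f y \<le> (kop K ^^ n') f x + \<delta>))"
proof -
  obtain b \<gamma> r \<alpha> \<nu> where V: "V \<in> borel_measurable M" "\<And>x. x \<in> space M \<Longrightarrow> 0 \<le> V x"
    and b: "0 \<le> b" and g: "0 < \<gamma>" "\<gamma> < 1" and r: "b / (1 - \<gamma>) < r" and a: "0 < \<alpha>" "\<alpha> \<le> 1"
    and mo: "minorized_markov_operator M (kop K) \<nu> {x \<in> space M. V x \<le> r} \<alpha>"
    and dr: "drift M (kop K) V \<gamma> (\<lambda>_. b)"
    by (rule assmA_drift_minorization[OF K A], rule that) assumption+
  interpret minorized_markov_operator M "kop K" \<nu> "{x \<in> space M. V x \<le> r}" \<alpha> by (rule mo)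
  define c where "c = (r - b / (1 - \<gamma>)) / (2 * r)"
  have c: "0 < c" "c \<le> 1" unfolding c_def using r b g by (simp_all add: field_simps)
  obtain k0 where k0: "\<And>k z. k0 \<le> k \<Longrightarrow> z \<in> space M \<Longrightarrow> V z < N \<Longrightarrow>
      c \<le> (kop K ^^ k) (indicator {x \<in> space M. V x \<le> r}) z"
    using funpow_sublevel_set_eventually_ge[OF markov dr g b V r, of N] unfolding c_def by blast
  show ?thesis
  proof (intro exI[of _ "Suc k0"] conjI exI[of _ "1 - \<alpha> * c"] allI impI)
    fix n n' x y f assume n: "Suc k0 \<le> n" "Suc k0 \<le> n'"
      and xy: "x \<in> {z\<in>space M. V z < N}" "y \<in> {z\<in>space M. V z < N}" and f: "f \<in> B1p M"
    have "(kop K ^^ n) f y \<le> \<alpha> * c * (\<integral>y. f y \<partial>\<nu>) + (1 - \<alpha> * c)"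
      using n xy by (intro funpow_bounds(2)[OF f] k0) auto
    moreover have "\<alpha> * c * (\<integral>y. f y \<partial>\<nu>) \<le> (kop K ^^ n') f x"
      using n xy by (intro funpow_bounds(1)[OF f] k0) auto
    ultimately show "(kop K ^^ n) f y \<le> (kop K ^^ n') f x + (1 - \<alpha> * c)" by linarith
  qed (use a c in \<open>simp_all add: mult_le_one\<close>)
qed

lemma assmA'_savg_oscillation:
  assumes K: "markov_kernel M K" and A: "assmA' M K V"
  shows "\<exists>n0::nat. n0 > 0 \<and> (\<exists>\<delta>. 0 \<le> \<delta> \<and> \<delta> < 1 \<and>
          (\<forall>n n' x y f. n0 \<le> n \<longrightarrow> n0 \<le> n' \<longrightarrow>
             x \<in> {z\<in>space M. V z < N} \<longrightarrow> y \<in> {z\<in>space M. V z < N} \<longrightarrow> f \<in> B1p M \<longrightarrow>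
             savg (kop K) n f y \<le> savg (kop K) n' f x + \<delta>))"
proof -
  obtain b \<gamma> S \<alpha> \<nu> where V: "V \<in> borel_measurable M" "\<And>x. x \<in> space M \<Longrightarrow> 1 \<le> V x"
    and b: "1 \<le> b" and g: "0 < \<gamma>" "\<gamma> < 1" and a: "0 < \<alpha>" "\<alpha> \<le> 1"
    and mo: "minorized_markov_operator M (kop K) \<nu> S \<alpha>" and S: "S \<in> sets M"
    and dr: "drift M (kop K) V \<gamma> (\<lambda>z. b * indicator S z)"
    by (rule assmA'_drift_minorization[OF K A], rule that) assumption+
  interpret minorized_markov_operator M "kop K" \<nu> S \<alpha> by (rule mo)
  define c where "c = (1 - \<gamma>) / (4 * b)"
  have c: "0 < c" "c \<le> 1" unfolding c_def using g b by (simp_all add: field_simps)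
  obtain n0 where n0: "0 < n0" and hit: "\<And>n z. n0 \<le> n \<Longrightarrow> z \<in> space M \<Longrightarrow> V z < N \<Longrightarrow>
      c \<le> (1 / real n) * (\<Sum>k<n - 1. (kop K ^^ k) (indicator S) z)"
    using cesaro_small_set_eventually_ge[OF markov dr g b S V, of N] unfolding c_def by blast
  show ?thesis
  proof (intro exI[of _ n0] conjI exI[of _ "1 - \<alpha> * c"] allI impI)
    fix n n' x y f assume n: "n0 \<le> n" "n0 \<le> n'"
      and xy: "x \<in> {z\<in>space M. V z < N}" "y \<in> {z\<in>space M. V z < N}" and f: "f \<in> B1p M"
    have "savg (kop K) n f y \<le> \<alpha> * c * (\<integral>y. f y \<partial>\<nu>) + (1 - \<alpha> * c)"
      using n xy n0 by (intro savg_bounds(2)[OF f] hit) auto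
    moreover have "\<alpha> * c * (\<integral>y. f y \<partial>\<nu>) \<le> savg (kop K) n' f x"
      using n xy n0 by (intro savg_bounds(1)[OF f] hit) auto
    ultimately show "savg (kop K) n f y \<le> savg (kop K) n' f x + (1 - \<alpha> * c)" by linarith
  qed (use a c n0 in \<open>simp_all add: mult_le_one\<close>)
qed

lemma assmA_funpow_assmC':
  assumes K: "markov_kernel M K" and A: "assmA M K V"
  shows "\<exists>n1. \<forall>n\<ge>n1. assmC' M (kop K ^^ n)"
proof -
  obtain b \<gamma> r \<alpha> \<nu> where V: "V \<in> borel_measurable M" "\<And>x. x \<in> space M \<Longrightarrow> 0 \<le> V x"
    and b: "0 \<le> b" and g: "0 < \<gamma>" "\<gamma> < 1" and r: "b / (1 - \<gamma>) < r" and a: "0 < \<alpha>" "\<alpha> \<le> 1"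
    and mo: "minorized_markov_operator M (kop K) \<nu> {x \<in> space M. V x \<le> r} \<alpha>"
    and dr: "drift M (kop K) V \<gamma> (\<lambda>_. b)"
    by (rule assmA_drift_minorization[OF K A], rule that) assumption+
  interpret minorized_markov_operator M "kop K" \<nu> "{x \<in> space M. V x \<le> r}" \<alpha> by (rule mo)
  interpret nu: prob_space \<nu> by (rule nu(1))
  obtain N where G: "0 < measure \<nu> {x \<in> space M. V x < N}"
    using sublevel_set_measure_pos[OF nu.finite_measure_axioms nu(2) V(1)] nu.prob_space by auto
  have GM: "{x \<in> space M. V x < N} \<in> sets M" using V(1) by measurable
  define c where "c = (r - b / (1 - \<gamma>)) / (2 * r)"
  have c: "0 < c" "c \<le> 1" unfolding c_def using r b g by (simp_all add: field_simps)
  obtain k0 where k0: "\<And>k z. k0 \<le> k \<Longrightarrow> z \<in> space M \<Longrightarrow> V z < max (r + 1) N \<Longrightarrow>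
      c \<le> (kop K ^^ k) (indicator {x \<in> space M. V x \<le> r}) z"
    using funpow_sublevel_set_eventually_ge[OF markov dr g b V r] unfolding c_def by blast
  have "assmC' M (kop K ^^ n)" if n: "Suc k0 \<le> n" for n
  proof (rule assmC'I[OF markov_operator_funpow[OF markov] nu C _ _ _ GM G c(1)])
    fix f x assume "f \<in> B1p M" "x \<in> {x \<in> space M. V x \<le> r}"
    then show "(kop K ^^ n) f x \<le> \<alpha> * c * (\<integral>y. f y \<partial>\<nu>) + (1 - \<alpha> * c)"
      using n by (intro funpow_bounds(2) k0) auto
  next
    fix j z assume j: "k0 \<le> j" and z: "z \<in> {x \<in> space M. V x < N}"
    have "j \<le> n * j" using n by simp
    with j have "k0 \<le> n * j" by linarith
    then have "c \<le> (kop K ^^ (n * j)) (indicator {x \<in> space M. V x \<le> r}) z"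
      using z by (intro k0) auto
    then show "c \<le> ((kop K ^^ n) ^^ j) (indicator {x \<in> space M. V x \<le> r}) z"
      by (simp add: funpow_mult)
  qed (use a c V in \<open>auto simp: mult_le_one\<close>)
  then show ?thesis by blast
qed

lemma assmA'_savg_assmC':
  assumes K: "markov_kernel M K" and A: "assmA' M K V"
  shows "\<exists>n1. \<forall>n\<ge>n1. assmC' M (savg (kop K) n)"
proof -
  obtain b \<gamma> S \<alpha> \<nu> where V: "V \<in> borel_measurable M" and V1: "\<And>x. x \<in> space M \<Longrightarrow> 1 \<le> V x"
    and b: "1 \<le> b" and g: "0 < \<gamma>" "\<gamma> < 1" and a: "0 < \<alpha>" "\<alpha> \<le> 1"
    and mo: "minorized_markov_operator M (kop K) \<nu> S \<alpha>" and S: "S \<in> sets M"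
    and dr: "drift M (kop K) V \<gamma> (\<lambda>z. b * indicator S z)"
    by (rule assmA'_drift_minorization[OF K A], rule that) assumption+
  interpret minorized_markov_operator M "kop K" \<nu> S \<alpha> by (rule mo)
  interpret nu: prob_space \<nu> by (rule nu(1))
  have V0: "\<And>x. x \<in> space M \<Longrightarrow> 0 \<le> V x" using V1 by (meson order_trans zero_le_one)
  have drc: "drift M (kop K) V \<gamma> (\<lambda>_. b)"
    by (rule drift_mono[OF dr]) (use b in \<open>auto simp: indicator_def\<close>)
  define B where "B = b / (1 - \<gamma>)"
  have B0: "0 \<le> B" unfolding B_def using b g by simp
  define r where "r = 2 * B + 1"
  have CM: "{x \<in> space M. V x \<le> r} \<in> sets M" using V by measurable
  obtain N where G: "0 < measure \<nu> {x \<in> space M. V x < N}"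
    using sublevel_set_measure_pos[OF nu.finite_measure_axioms nu(2) V] nu.prob_space by auto
  have GM: "{x \<in> space M. V x < N} \<in> sets M" using V by measurable
  define c where "c = (1 - \<gamma>) / (4 * b)"
  have c: "0 < c" "c \<le> 1" unfolding c_def using g b by (simp_all add: field_simps)
  define c' where "c' = (r - B / (1 - 1/2)) / (2 * r)"
  have c': "0 < c'" unfolding c'_def r_def using B0 by simp
  obtain n0 where n0: "0 < n0" and hit: "\<And>n z. n0 \<le> n \<Longrightarrow> z \<in> space M \<Longrightarrow> V z < r + 1 \<Longrightarrow>
      c \<le> (1 / real n) * (\<Sum>k<n - 1. (kop K ^^ k) (indicator S) z)"
    using cesaro_small_set_eventually_ge[OF markov dr g b S V V1, of "r + 1"] unfolding c_def by blast
  have "assmC' M (savg (kop K) n)" if n: "max n0 (nat \<lceil>2 / (1 - \<gamma>)\<rceil>) \<le> n" for n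
  proof -
    have n0n: "n0 \<le> n" and npos: "0 < n" using n n0 by auto
    have "drift M (savg (kop K) n) V (1/2) (\<lambda>_. B)"
      unfolding B_def using n b by (intro drift_savg[OF markov drc g _ V0]) auto
    from funpow_sublevel_set_eventually_ge[OF markov_operator_savg[OF markov npos] this _ _ B0 V V0, of r N]
    obtain j0 where rec: "\<And>j z. j0 \<le> j \<Longrightarrow> z \<in> space M \<Longrightarrow> V z < N \<Longrightarrow>
        c' \<le> (savg (kop K) n ^^ j) (indicator {x \<in> space M. V x \<le> r}) z"
      unfolding c'_def r_def by auto
    show ?thesis
    proof (rule assmC'I[OF markov_operator_savg[OF markov npos] nu CM _ _ _ GM G c'])
      fix f x assume "f \<in> B1p M" "x \<in> {x \<in> space M. V x \<le> r}"
      then show "savg (kop K) n f x \<le> \<alpha> * c * (\<integral>y. f y \<partial>\<nu>) + (1 - \<alpha> * c)"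
        using n0n npos by (intro savg_bounds(2) hit) auto
    qed (use a c V rec in \<open>auto simp: mult_le_one\<close>)
  qed
  then show ?thesis by blast
qed

lemma assmB_cesaro_INF_pos:
  assumes K: "markov_kernel M K" and B: "assmB M K V b C"
    and m: "finite_measure m" "sets m = sets M" "emeasure m (space m) \<noteq> 0"
  shows "\<exists>n0::nat. n0 > 0 \<and> (INF n\<in>{n0..}. \<integral>y. savg (kop K) n (indicator C) y \<partial>m) > 0"
proof -
  have V: "V \<in> borel_measurable M" and V0: "\<And>x. x \<in> space M \<Longrightarrow> 0 \<le> V x" and C: "C \<in> sets M"
    using B unfolding assmB_def by simp_all
  interpret finite_measure m by (rule m(1))
  obtain N where G: "0 < measure m {x \<in> space M. V x < N}"
    using sublevel_set_measure_pos[OF m(1,2) V] m(3) emeasure_eq_measure by (auto simp: less_le)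
  have GM: "{x \<in> space M. V x < N} \<in> sets M" using V by measurable
  obtain n0 where n0: "0 < n0" and hit: "\<And>n z. n0 \<le> n \<Longrightarrow> z \<in> space M \<Longrightarrow> V z < N \<Longrightarrow>
      1 / (2 * max b 1) \<le> savg (kop K) n (indicator C) z"
    using cesaro_recurrent_set_eventually_ge[OF markov_operator_kop[OF K] drift_of_assmB[OF K B] _ C V V0,
        of N] by auto
  have "0 < (INF n\<in>{n0..}. \<integral>y. savg (kop K) n (indicator C) y \<partial>m)"
  proof (rule INF_integral_pos[OF m(1,2) GM G])
    fix n assume "n0 \<le> n"
    then have Q: "markov_operator M (savg (kop K) n)"
      using n0 by (intro markov_operator_savg markov_operator_kop K) auto
    show "bounded_measurable M (savg (kop K) n (indicator C))"
      by (rule markov_operator_closed[OF Q bounded_measurable_indicator[OF C]])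
    show "\<And>z. z \<in> space M \<Longrightarrow> 0 \<le> savg (kop K) n (indicator C) z"
      by (rule markov_operator_nonneg[OF Q bounded_measurable_indicator[OF C]]) auto
  qed (use hit in auto)
  with n0 show ?thesis by blast
qed

theorem proposition3p7:
  fixes M :: "'a measure" and K :: "'a \<Rightarrow> 'a measure"
  assumes "markov_kernel M K"
  shows
   "(\<forall>V. assmA M K V \<longrightarrow>
       (\<forall>N>0. \<exists>n0::nat. n0 > 0 \<and> (\<exists>\<delta>. 0 \<le> \<delta> \<and> \<delta> < 1 \<and>
          (\<forall>n n' x y f. n0 \<le> n \<longrightarrow> n0 \<le> n' \<longrightarrow>
             x \<in> {z\<in>space M. V z < N} \<longrightarrow> y \<in> {z\<in>space M. V z < N} \<longrightarrow> f \<in> B1p M \<longrightarrow>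
             (kop K ^^ n) f y \<le> (kop K ^^ n') f x + \<delta>)))) \<and>
    (\<forall>V. assmA' M K V \<longrightarrow>
       (\<forall>N>0. \<exists>n0::nat. n0 > 0 \<and> (\<exists>\<delta>. 0 \<le> \<delta> \<and> \<delta> < 1 \<and>
          (\<forall>n n' x y f. n0 \<le> n \<longrightarrow> n0 \<le> n' \<longrightarrow>
             x \<in> {z\<in>space M. V z < N} \<longrightarrow> y \<in> {z\<in>space M. V z < N} \<longrightarrow> f \<in> B1p M \<longrightarrow>
             savg (kop K) n f y \<le> savg (kop K) n' f x + \<delta>)))) \<and>
    (\<forall>V. assmA M K V \<longrightarrow> (\<exists>n1. \<forall>n\<ge>n1. assmC' M (kop K ^^ n))) \<and>
    (\<forall>V. assmA' M K V \<longrightarrow> (\<exists>n1. \<forall>n\<ge>n1. assmC' M (savg (kop K) n))) \<and>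
    (\<forall>V b C. assmB M K V b C \<longrightarrow>
       (\<forall>m. finite_measure m \<and> sets m = sets M \<and> emeasure m (space m) \<noteq> 0 \<longrightarrow>
          (\<exists>n0::nat. n0 > 0 \<and> (INF n\<in>{n0..}. \<integral>y. savg (kop K) n (indicator C) y \<partial>m) > 0)))"
  by (intro conjI allI impI; (elim conjE)?)
    (erule assmA_funpow_oscillation[OF assms] assmA'_savg_oscillation[OF assms]
      assmA_funpow_assmC'[OF assms] assmA'_savg_assmC'[OF assms] assmB_cesaro_INF_pos[OF assms];
      assumption)+

end
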